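(* Let $X$ be an angled $G$-complex on which $G$ acts properly and cocompactly, and suppose $\kappa(f)\le0$ for each $2$-cell $f$ of $X$. If $H$ is a subgroup of $G$, $Y$ is an $H$-cocompact $H$-complex, and $Y\to X$ is an $H$-equivariant immersion, then \[|\mathrm{nega}(H,Y)|\le\frac{2\pi\cdot\chi(H,Y)-B_+(G,X)\cdot|\mathrm{pos}(H,Y)|}{B_-(G,X)}.\]
   Context: A $G$-complex is a combinatorial 2-complex with cellular $G$-action without inversions; angles $\measuredangle(c)$ are $G$-invariant reals on corners of $2$-cells, and $Y$ carries the angles pulled back from $X$. For a $2$-cell $f$, $\kappa(f)=\sum_{c\in\mathrm{corners}(f)}\measuredangle(c)-\pi(|\partial f|-2)$ (times $|G_f|^{-1}$ for orbits). $\mathrm{link}(x)$ of a $0$-cell has a vertex per end of a $1$-cell at $x$ and an edge (with angle) per corner at $x$. For a group $K$, $|K|^{-1}=1/|K|$ if finite, else $0$; for a graph $\Delta$ with $K$-action, finitely many orbits and edge angles, $\kappa(K,\Delta)=2\pi|K|^{-1}-\sum_v\pi|K_v|^{-1}+\sum_e(\pi-\measuredangle(e))|K_e|^{-1}$ (sums over orbit representatives). For $K\le G_x$, a $K$-section of $\mathrm{link}(x)$ is a $K$-invariant subgraph with finitely many $K$-orbits. $B_-(G,X)$ is the maximum of $\kappa(K,\Delta)$ over all $0$-cells $x$, subgroups $K\le G_x$ and $K$-sections $\Delta$ of $\mathrm{link}(x)$ with $\kappa(K,\Delta)<0$ (or $-1$ if there are none); $B_+(G,X)$ is the maximum over those with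 $\kappa(K,\Delta)\ge0$ (or $0$ if none). For $v\in I^0(H,Y)$ (the $H$-orbits of $0$-cells) with representative $y$, $\kappa(v)=\kappa(H_y,\mathrm{link}(y,Y))$; $\mathrm{nega}(H,Y)=\{v:\kappa(v)<0\}$, $\mathrm{pos}(H,Y)=\{v:\kappa(v)>0\}$. $\chi(H,Y)=\sum_{I^0}|H_\sigma|^{-1}-\sum_{I^1}|H_\sigma|^{-1}+\sum_{I^2}|H_\sigma|^{-1}$ over $H$-orbits of cells. *)

theory Defs
  imports Complex_Main "HOL-Algebra.Group"
begin

text \<open>A combinatorial 2-complex: 0-cells, oriented 1-cells (with source and target),
  and 2-cells whose attaching map is a closed combinatorial path, given as a nonempty list
  of oriented 1-cells ((e,True) = e traversed forwards, (e,False) = backwards).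
  Position i of a 2-cell f with boundary length n carries the i-th boundary edge, and the
  corner (f,i) is the corner between boundary edges i and (i+1) mod n.\<close>

record ('v,'e,'f) cplx =
  cV :: "'v set"
  cE :: "'e set"
  cF :: "'f set"
  csrc :: "'e \<Rightarrow> 'v"
  ctgt :: "'e \<Rightarrow> 'v"
  cbd :: "'f \<Rightarrow> ('e \<times> bool) list"

definition otail :: "('v,'e,'f) cplx \<Rightarrow> 'e \<times> bool \<Rightarrow> 'v" where
  "otail X oe = (if snd oe then csrc X (fst oe) else ctgt X (fst oe))"

definition ohead :: "('v,'e,'f) cplx \<Rightarrow> 'e \<times> bool \<Rightarrow> 'v" where
  "ohead X oe = (if snd oe then ctgt X (fst oe) else csrc X (fst oe))"

definition blen :: "('v,'e,'f) cplx \<Rightarrow> 'f \<Rightarrow> nat" where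
  "blen X f = length (cbd X f)"

definition wf_cplx :: "('v,'e,'f) cplx \<Rightarrow> bool" where
  "wf_cplx X \<longleftrightarrow>
     (\<forall>e\<in>cE X. csrc X e \<in> cV X \<and> ctgt X e \<in> cV X) \<and>
     (\<forall>f\<in>cF X. cbd X f \<noteq> [] \<and> fst ` set (cbd X f) \<subseteq> cE X \<and>
        (\<forall>i < blen X f. ohead X (cbd X f ! i) = otail X (cbd X f ! ((i + 1) mod blen X f))))"

text \<open>Ends of 1-cells: (e,True) is the end of e at its source, (e,False) the end at its target.\<close>
definition endpt :: "('v,'e,'f) cplx \<Rightarrow> 'e \<times> bool \<Rightarrow> 'v" where
  "endpt X en = (if snd en then csrc X (fst en) else ctgt X (fst en))"

definition corners :: "('v,'e,'f) cplx \<Rightarrow> ('f \<times> nat) set" where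
  "corners X = {(f,i). f \<in> cF X \<and> i < blen X f}"

definition corner_vertex :: "('v,'e,'f) cplx \<Rightarrow> 'f \<times> nat \<Rightarrow> 'v" where
  "corner_vertex X c = ohead X (cbd X (fst c) ! snd c)"

text \<open>The link of a 0-cell x: vertices are the ends of 1-cells at x, edges are the corners
  at x; the corner (f,i) joins the end of boundary edge i where the path arrives at x with
  the end of boundary edge i+1 where the path leaves x.\<close>
definition link_verts :: "('v,'e,'f) cplx \<Rightarrow> 'v \<Rightarrow> ('e \<times> bool) set" where
  "link_verts X x = {en. fst en \<in> cE X \<and> endpt X en = x}"

definition link_edges :: "('v,'e,'f) cplx \<Rightarrow> 'v \<Rightarrow> ('f \<times> nat) set" where
  "link_edges X x = {c \<in> corners X. corner_vertex X c = x}"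

definition link_ends :: "('v,'e,'f) cplx \<Rightarrow> 'f \<times> nat \<Rightarrow> ('e \<times> bool) \<times> ('e \<times> bool)" where
  "link_ends X c = (let f = fst c; i = snd c; oe = cbd X f ! i;
                        oe' = cbd X f ! ((i + 1) mod blen X f)
                    in ((fst oe, \<not> snd oe), oe'))"

text \<open>A combinatorial map: maps on cells of each dimension (1-cells are mapped preserving the
  chosen orientations), and for each 2-cell a dihedral identification of its boundary with
  that of its image: rotation mrot and reflection flag mrefl.\<close>

record ('v,'e,'f,'w,'d,'h) cmorph =
  mV :: "'v \<Rightarrow> 'w"
  mE :: "'e \<Rightarrow> 'd"
  mF :: "'f \<Rightarrow> 'h"
  mrot :: "'f \<Rightarrow> nat"
  mrefl :: "'f \<Rightarrow> bool"

definition dpos :: "bool \<Rightarrow> nat \<Rightarrow> nat \<Rightarrow> nat \<Rightarrow> nat" where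
  "dpos r k n i = (if r then nat ((int k - int i) mod int n) else (k + i) mod n)"

definition cmorphism :: "('v,'e,'f) cplx \<Rightarrow> ('w,'d,'h) cplx \<Rightarrow> ('v,'e,'f,'w,'d,'h) cmorph \<Rightarrow> bool" where
  "cmorphism X Y m \<longleftrightarrow>
     (\<forall>v\<in>cV X. mV m v \<in> cV Y) \<and>
     (\<forall>e\<in>cE X. mE m e \<in> cE Y \<and> csrc Y (mE m e) = mV m (csrc X e) \<and> ctgt Y (mE m e) = mV m (ctgt X e)) \<and>
     (\<forall>f\<in>cF X. mF m f \<in> cF Y \<and> blen Y (mF m f) = blen X f \<and> mrot m f < blen X f \<and>
        (\<forall>i < blen X f. cbd Y (mF m f) ! dpos (mrefl m f) (mrot m f) (blen X f) i
                        = (mE m (fst (cbd X f ! i)), snd (cbd X f ! i) \<noteq> mrefl m f)))"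

text \<open>Induced map on corners: under a reflection the corner between positions i and i+1
  goes to the corner between positions k-i-1 and k-i.\<close>
definition cmapC :: "('v,'e,'f) cplx \<Rightarrow> ('v,'e,'f,'w,'d,'h) cmorph \<Rightarrow> 'f \<times> nat \<Rightarrow> 'h \<times> nat" where
  "cmapC X m c = (let f = fst c; i = snd c; n = blen X f in
     (mF m f, if mrefl m f then nat ((int (mrot m f) - int i - 1) mod int n)
              else (mrot m f + i) mod n))"

definition cmapEnd :: "('v,'e,'f,'w,'d,'h) cmorph \<Rightarrow> 'e \<times> bool \<Rightarrow> 'd \<times> bool" where
  "cmapEnd m en = (mE m (fst en), snd en)"

definition immersion :: "('v,'e,'f) cplx \<Rightarrow> ('w,'d,'h) cplx \<Rightarrow> ('v,'e,'f,'w,'d,'h) cmorph \<Rightarrow> bool" where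
  "immersion X Y m \<longleftrightarrow> cmorphism X Y m \<and>
     (\<forall>x\<in>cV X. inj_on (cmapEnd m) (link_verts X x) \<and> inj_on (cmapC X m) (link_edges X x))"

text \<open>Acting without inversions is
  equivalent to the existence of a G-invariant orientation of the 1-cells, so we take the
  orientation of X to be G-invariant (the maps preserve source and target).\<close>
definition group_cact :: "'g monoid \<Rightarrow> ('g \<Rightarrow> ('v,'e,'f,'v,'e,'f) cmorph) \<Rightarrow> ('v,'e,'f) cplx \<Rightarrow> bool" where
  "group_cact G act X \<longleftrightarrow> group G \<and> wf_cplx X \<and>
     (\<forall>g\<in>carrier G. cmorphism X X (act g) \<and> bij_betw (mV (act g)) (cV X) (cV X) \<and>
        bij_betw (mE (act g)) (cE X) (cE X) \<and> bij_betw (mF (act g)) (cF X) (cF X)) \<and>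
     (\<forall>v\<in>cV X. mV (act \<one>\<^bsub>G\<^esub>) v = v) \<and> (\<forall>e\<in>cE X. mE (act \<one>\<^bsub>G\<^esub>) e = e) \<and>
     (\<forall>f\<in>cF X. mF (act \<one>\<^bsub>G\<^esub>) f = f) \<and> (\<forall>c\<in>corners X. cmapC X (act \<one>\<^bsub>G\<^esub>) c = c) \<and>
     (\<forall>g\<in>carrier G. \<forall>h\<in>carrier G.
        (\<forall>v\<in>cV X. mV (act (g \<otimes>\<^bsub>G\<^esub> h)) v = mV (act g) (mV (act h) v)) \<and>
        (\<forall>e\<in>cE X. mE (act (g \<otimes>\<^bsub>G\<^esub> h)) e = mE (act g) (mE (act h) e)) \<and>
        (\<forall>f\<in>cF X. mF (act (g \<otimes>\<^bsub>G\<^esub> h)) f = mF (act g) (mF (act h) f)) \<and>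
        (\<forall>c\<in>corners X. cmapC X (act (g \<otimes>\<^bsub>G\<^esub> h)) c = cmapC X (act g) (cmapC X (act h) c)))"

definition orb :: "'g set \<Rightarrow> ('g \<Rightarrow> 'a \<Rightarrow> 'a) \<Rightarrow> 'a \<Rightarrow> 'a set" where
  "orb K a x = (\<lambda>g. a g x) ` K"

definition orbs :: "'g set \<Rightarrow> ('g \<Rightarrow> 'a \<Rightarrow> 'a) \<Rightarrow> 'a set \<Rightarrow> 'a set set" where
  "orbs K a S = orb K a ` S"

definition stab :: "'g set \<Rightarrow> ('g \<Rightarrow> 'a \<Rightarrow> 'a) \<Rightarrow> 'a \<Rightarrow> 'g set" where
  "stab K a x = {g \<in> K. a g x = x}"

definition invc :: "'a set \<Rightarrow> real" where
  "invc A = (if finite A then 1 / real (card A) else 0)"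

definition rep :: "'a set \<Rightarrow> 'a" where
  "rep A = (SOME x. x \<in> A)"

definition actV where "actV act = (\<lambda>g. mV (act g))"
definition actE where "actE act = (\<lambda>g. mE (act g))"
definition actF where "actF act = (\<lambda>g. mF (act g))"
definition actEnd where "actEnd act = (\<lambda>g. cmapEnd (act g))"
definition actC where "actC X act = (\<lambda>g. cmapC X (act g))"

definition kappa_graph ::
  "'g set \<Rightarrow> ('g \<Rightarrow> 'a \<Rightarrow> 'a) \<Rightarrow> 'a set \<Rightarrow> ('g \<Rightarrow> 'b \<Rightarrow> 'b) \<Rightarrow> 'b set \<Rightarrow> ('b \<Rightarrow> real) \<Rightarrow> real" where
  "kappa_graph K av Vs ae Es alpha =
     2 * pi * invc K
     - (\<Sum>Ob\<in>orbs K av Vs. pi * invc (stab K av (rep Ob)))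
     + (\<Sum>Ob\<in>orbs K ae Es. (pi - alpha (rep Ob)) * invc (stab K ae (rep Ob)))"

definition kappa_face :: "('v,'e,'f) cplx \<Rightarrow> ('f \<times> nat \<Rightarrow> real) \<Rightarrow> 'f \<Rightarrow> real" where
  "kappa_face X ang f = (\<Sum>i<blen X f. ang (f, i)) - pi * (real (blen X f) - 2)"

definition is_section ::
  "('v,'e,'f) cplx \<Rightarrow> ('g \<Rightarrow> ('v,'e,'f,'v,'e,'f) cmorph) \<Rightarrow> 'g set \<Rightarrow> 'v
     \<Rightarrow> ('e \<times> bool) set \<Rightarrow> ('f \<times> nat) set \<Rightarrow> bool" where
  "is_section X act K x Vs Es \<longleftrightarrow>
     Vs \<subseteq> link_verts X x \<and> Es \<subseteq> link_edges X x \<and>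
     (\<forall>c\<in>Es. fst (link_ends X c) \<in> Vs \<and> snd (link_ends X c) \<in> Vs) \<and>
     (\<forall>g\<in>K. \<forall>v\<in>Vs. actEnd act g v \<in> Vs) \<and>
     (\<forall>g\<in>K. \<forall>c\<in>Es. actC X act g c \<in> Es) \<and>
     finite (orbs K (actEnd act) Vs) \<and> finite (orbs K (actC X act) Es)"

definition Bvals ::
  "'g monoid \<Rightarrow> ('v,'e,'f) cplx \<Rightarrow> ('g \<Rightarrow> ('v,'e,'f,'v,'e,'f) cmorph) \<Rightarrow> ('f \<times> nat \<Rightarrow> real) \<Rightarrow> real set" where
  "Bvals G X act ang =
     {kappa_graph K (actEnd act) Vs (actC X act) Es ang | x K Vs Es.
        x \<in> cV X \<and> subgroup K G \<and> K \<subseteq> stab (carrier G) (actV act) x \<and>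
        is_section X act K x Vs Es}"

definition Bminus where
  "Bminus G X act ang =
     (let S = {k \<in> Bvals G X act ang. k < 0} in if S = {} then -1 else Max S)"

definition Bplus where
  "Bplus G X act ang =
     (let S = {k \<in> Bvals G X act ang. k \<ge> 0} in if S = {} then 0 else Max S)"

definition kappa_vertex ::
  "'g set \<Rightarrow> ('v,'e,'f) cplx \<Rightarrow> ('g \<Rightarrow> ('v,'e,'f,'v,'e,'f) cmorph) \<Rightarrow> ('f \<times> nat \<Rightarrow> real) \<Rightarrow> 'v set \<Rightarrow> real" where
  "kappa_vertex H Y act ang v =
     (let y = rep v in
      kappa_graph (stab H (actV act) y) (actEnd act) (link_verts Y y) (actC Y act) (link_edges Y y) ang)"

definition nega where
  "nega H Y act ang = {v \<in> orbs H (actV act) (cV Y). kappa_vertex H Y act ang v < 0}"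

definition posi where
  "posi H Y act ang = {v \<in> orbs H (actV act) (cV Y). kappa_vertex H Y act ang v > 0}"

definition euler_char :: "'g set \<Rightarrow> ('v,'e,'f) cplx \<Rightarrow> ('g \<Rightarrow> ('v,'e,'f,'v,'e,'f) cmorph) \<Rightarrow> real" where
  "euler_char H Y act =
     (\<Sum>Ob\<in>orbs H (actV act) (cV Y). invc (stab H (actV act) (rep Ob)))
     - (\<Sum>Ob\<in>orbs H (actE act) (cE Y). invc (stab H (actE act) (rep Ob)))
     + (\<Sum>Ob\<in>orbs H (actF act) (cF Y). invc (stab H (actF act) (rep Ob)))"

definition proper_act where
  "proper_act K X act \<longleftrightarrow>
     (\<forall>v\<in>cV X. finite (stab K (actV act) v)) \<and> (\<forall>e\<in>cE X. finite (stab K (actE act) e)) \<and>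
     (\<forall>f\<in>cF X. finite (stab K (actF act) f))"

definition cocompact_act where
  "cocompact_act K X act \<longleftrightarrow>
     finite (orbs K (actV act) (cV X)) \<and> finite (orbs K (actE act) (cE X)) \<and>
     finite (orbs K (actF act) (cF X))"

definition equivariant where
  "equivariant H Y X actY actX phi \<longleftrightarrow>
     (\<forall>h\<in>H. (\<forall>y\<in>cV Y. mV phi (mV (actY h) y) = mV (actX h) (mV phi y)) \<and>
        (\<forall>e\<in>cE Y. mE phi (mE (actY h) e) = mE (actX h) (mE phi e)) \<and>
        (\<forall>f\<in>cF Y. mF phi (mF (actY h) f) = mF (actX h) (mF phi f)) \<and>
        (\<forall>c\<in>corners Y. cmapC Y phi (cmapC Y (actY h) c) = cmapC X (actX h) (cmapC Y phi c)))"

end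

theory Submission
  imports Defs
begin

text \<open>
  Pull the angles of X back to Y along the immersion. The combinatorial Gauss--Bonnet theorem
  for the H-cocompact complex Y (all sums over orbits, weighted by inverse stabiliser orders)
  writes 2\<pi>\<chi>(H,Y) as the sum of the vertex curvatures \<kappa>(v) minus the face curvatures;
  a face of Y has the curvature of its image face in X, which is \<le> 0, so 2\<pi>\<chi>(H,Y) \<le> \<Sum>\<kappa>(v).
  Since Y \<rightarrow> X is an equivariant immersion, the link of y embeds H_y-equivariantly into the link of
  its image, so \<kappa>(v) is the curvature of an H_y-section of a link of X, i.e. one of the values
  defining B_\<plusminus>(G,X). Properness and cocompactness of X bound the sizes of links and
  stabilisers, so there are only finitely many such values; hence \<kappa>(v) \<le> B_- at negative and
  \<kappa>(v) \<le> B_+ at positive vertices, and dividing by B_- < 0 gives the bound.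
\<close>

section \<open>Subgroup actions and orbit sums\<close>

lemma (in group) inv_mult_cancel_left: "x \<in> carrier G \<Longrightarrow> y \<in> carrier G \<Longrightarrow> inv x \<otimes> (x \<otimes> y) = y"
  by (simp add: m_assoc[symmetric])

lemma (in group) mult_inv_cancel_left: "x \<in> carrier G \<Longrightarrow> y \<in> carrier G \<Longrightarrow> x \<otimes> (inv x \<otimes> y) = y"
  by (simp add: m_assoc[symmetric])

lemma rep_mem_nonempty: "A \<noteq> {} \<Longrightarrow> rep A \<in> A"
  unfolding rep_def by (simp add: some_in_eq)

locale subgroup_action =
  fixes G :: "'g monoid" and K :: "'g set" and a :: "'g \<Rightarrow> 'a \<Rightarrow> 'a" and S :: "'a set"
  assumes is_group: "group G"
    and is_subgroup: "subgroup K G"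
    and act_closed: "g \<in> K \<Longrightarrow> x \<in> S \<Longrightarrow> a g x \<in> S"
    and act_one: "x \<in> S \<Longrightarrow> a \<one>\<^bsub>G\<^esub> x = x"
    and act_mult: "g \<in> K \<Longrightarrow> h \<in> K \<Longrightarrow> x \<in> S \<Longrightarrow> a (g \<otimes>\<^bsub>G\<^esub> h) x = a g (a h x)"
begin

lemma in_carrier: "g \<in> K \<Longrightarrow> g \<in> carrier G"
  using subgroup.subset[OF is_subgroup] by blast

lemma inv_mem: "g \<in> K \<Longrightarrow> inv\<^bsub>G\<^esub> g \<in> K"
  by (rule subgroup.m_inv_closed[OF is_subgroup])

lemma mult_mem: "g \<in> K \<Longrightarrow> h \<in> K \<Longrightarrow> g \<otimes>\<^bsub>G\<^esub> h \<in> K"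
  by (rule subgroup.m_closed[OF is_subgroup])

lemma one_mem: "\<one>\<^bsub>G\<^esub> \<in> K"
  by (rule subgroup.one_closed[OF is_subgroup])

lemma act_inv_act: "g \<in> K \<Longrightarrow> x \<in> S \<Longrightarrow> a (inv\<^bsub>G\<^esub> g) (a g x) = x"
  by (metis act_mult inv_mem act_one in_carrier group.l_inv is_group)

lemma orb_subset: "x \<in> S \<Longrightarrow> orb K a x \<subseteq> S"
  unfolding orb_def using act_closed by blast

lemma orb_self: "x \<in> S \<Longrightarrow> x \<in> orb K a x"
  unfolding orb_def using act_one one_mem by force

lemma orb_act_subset: "g \<in> K \<Longrightarrow> x \<in> S \<Longrightarrow> orb K a (a g x) \<subseteq> orb K a x"
  unfolding orb_def by (auto simp: act_mult[symmetric] mult_mem)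

lemma orb_act: "g \<in> K \<Longrightarrow> x \<in> S \<Longrightarrow> orb K a (a g x) = orb K a x"
  using orb_act_subset orb_act_subset[OF inv_mem act_closed] act_inv_act by (metis subset_antisym)

lemma orb_eq: "x \<in> S \<Longrightarrow> y \<in> orb K a x \<Longrightarrow> orb K a y = orb K a x"
  using orb_act by (auto simp: orb_def[of K a x])

lemma rep_mem: "Ob \<in> orbs K a S \<Longrightarrow> rep Ob \<in> Ob"
  unfolding orbs_def orb_def using one_mem by (auto intro: rep_mem_nonempty)

lemma rep_in_set: "Ob \<in> orbs K a S \<Longrightarrow> rep Ob \<in> S"
  using rep_mem orb_subset unfolding orbs_def by blast

lemma orb_rep: "Ob \<in> orbs K a S \<Longrightarrow> orb K a (rep Ob) = Ob"
  using rep_mem orb_eq unfolding orbs_def by blast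

lemma stab_subgroup: "x \<in> S \<Longrightarrow> subgroup (stab K a x) G"
proof
  assume x: "x \<in> S"
  show "stab K a x \<subseteq> carrier G" unfolding stab_def using in_carrier by blast
  show "\<And>g h. g \<in> stab K a x \<Longrightarrow> h \<in> stab K a x \<Longrightarrow> g \<otimes>\<^bsub>G\<^esub> h \<in> stab K a x"
    unfolding stab_def using x by (auto simp: act_mult mult_mem)
  show "\<one>\<^bsub>G\<^esub> \<in> stab K a x" unfolding stab_def using x one_mem act_one by blast
  show "\<And>g. g \<in> stab K a x \<Longrightarrow> inv\<^bsub>G\<^esub> g \<in> stab K a x"
    unfolding stab_def using x by (auto simp: inv_mem) (metis act_inv_act)
qed

lemma bij_betw_stab_conj:
  assumes g: "g \<in> K" and x: "x \<in> S"
  shows "bij_betw (\<lambda>k. g \<otimes>\<^bsub>G\<^esub> k \<otimes>\<^bsub>G\<^esub> inv\<^bsub>G\<^esub> g) (stab K a x) (stab K a (a g x))"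
proof (rule bij_betw_byWitness[where f'="\<lambda>k. inv\<^bsub>G\<^esub> g \<otimes>\<^bsub>G\<^esub> k \<otimes>\<^bsub>G\<^esub> g"])
  interpret group G by (rule is_group)
  have gc: "g \<in> carrier G" by (rule in_carrier[OF g])
  show "\<forall>k\<in>stab K a x. inv\<^bsub>G\<^esub> g \<otimes>\<^bsub>G\<^esub> (g \<otimes>\<^bsub>G\<^esub> k \<otimes>\<^bsub>G\<^esub> inv\<^bsub>G\<^esub> g) \<otimes>\<^bsub>G\<^esub> g = k"
    unfolding stab_def using gc in_carrier by (auto simp: m_assoc inv_mult_cancel_left)
  show "\<forall>k\<in>stab K a (a g x). g \<otimes>\<^bsub>G\<^esub> (inv\<^bsub>G\<^esub> g \<otimes>\<^bsub>G\<^esub> k \<otimes>\<^bsub>G\<^esub> g) \<otimes>\<^bsub>G\<^esub> inv\<^bsub>G\<^esub> g = k"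
    unfolding stab_def using gc in_carrier by (auto simp: m_assoc mult_inv_cancel_left)
  show "(\<lambda>k. g \<otimes>\<^bsub>G\<^esub> k \<otimes>\<^bsub>G\<^esub> inv\<^bsub>G\<^esub> g) ` stab K a x \<subseteq> stab K a (a g x)"
  proof (intro image_subsetI)
    fix k assume "k \<in> stab K a x"
    hence k: "k \<in> K" "a k x = x" unfolding stab_def by auto
    have "a (g \<otimes>\<^bsub>G\<^esub> k \<otimes>\<^bsub>G\<^esub> inv\<^bsub>G\<^esub> g) (a g x) = a (g \<otimes>\<^bsub>G\<^esub> k) (a (inv\<^bsub>G\<^esub> g) (a g x))"
      using act_mult[OF mult_mem[OF g k(1)] inv_mem[OF g] act_closed[OF g x]] .
    also have "\<dots> = a g (a k x)" using act_inv_act[OF g x] act_mult[OF g k(1) x] by simp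
    also have "\<dots> = a g x" using k by simp
    finally show "g \<otimes>\<^bsub>G\<^esub> k \<otimes>\<^bsub>G\<^esub> inv\<^bsub>G\<^esub> g \<in> stab K a (a g x)"
      unfolding stab_def using g k by (simp add: mult_mem inv_mem)
  qed
  show "(\<lambda>k. inv\<^bsub>G\<^esub> g \<otimes>\<^bsub>G\<^esub> k \<otimes>\<^bsub>G\<^esub> g) ` stab K a (a g x) \<subseteq> stab K a x"
  proof (intro image_subsetI)
    fix k assume "k \<in> stab K a (a g x)"
    hence k: "k \<in> K" "a k (a g x) = a g x" unfolding stab_def by auto
    have "a (inv\<^bsub>G\<^esub> g \<otimes>\<^bsub>G\<^esub> k \<otimes>\<^bsub>G\<^esub> g) x = a (inv\<^bsub>G\<^esub> g) (a k (a g x))"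
      using act_mult[OF mult_mem[OF inv_mem[OF g] k(1)] g x]
        act_mult[OF inv_mem[OF g] k(1) act_closed[OF g x]] by simp
    also have "\<dots> = x" using g k x by (simp add: act_inv_act)
    finally show "inv\<^bsub>G\<^esub> g \<otimes>\<^bsub>G\<^esub> k \<otimes>\<^bsub>G\<^esub> g \<in> stab K a x"
      unfolding stab_def using g k by (simp add: mult_mem inv_mem)
  qed
qed

lemma card_stab_act: "g \<in> K \<Longrightarrow> x \<in> S \<Longrightarrow> card (stab K a (a g x)) = card (stab K a x)"
  by (simp add: bij_betw_same_card[OF bij_betw_stab_conj])

lemma invc_stab_act: "g \<in> K \<Longrightarrow> x \<in> S \<Longrightarrow> invc (stab K a (a g x)) = invc (stab K a x)"
  unfolding invc_def by (simp add: card_stab_act bij_betw_finite[OF bij_betw_stab_conj])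

lemma invc_stab_orb: "x \<in> S \<Longrightarrow> y \<in> orb K a x \<Longrightarrow> invc (stab K a y) = invc (stab K a x)"
  unfolding orb_def using invc_stab_act by blast

lemma bij_betw_stab_transporter:
  assumes g0: "g0 \<in> K" and x: "x \<in> S"
  shows "bij_betw (\<lambda>k. g0 \<otimes>\<^bsub>G\<^esub> k) (stab K a x) {g \<in> K. a g x = a g0 x}"
proof (rule bij_betw_byWitness[where f'="\<lambda>k. inv\<^bsub>G\<^esub> g0 \<otimes>\<^bsub>G\<^esub> k"])
  interpret group G by (rule is_group)
  show "\<forall>k\<in>stab K a x. inv\<^bsub>G\<^esub> g0 \<otimes>\<^bsub>G\<^esub> (g0 \<otimes>\<^bsub>G\<^esub> k) = k"
    unfolding stab_def using in_carrier g0 by (auto simp: inv_mult_cancel_left)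
  show "\<forall>k\<in>{g \<in> K. a g x = a g0 x}. g0 \<otimes>\<^bsub>G\<^esub> (inv\<^bsub>G\<^esub> g0 \<otimes>\<^bsub>G\<^esub> k) = k"
    using in_carrier g0 by (auto simp: mult_inv_cancel_left)
  show "(\<lambda>k. g0 \<otimes>\<^bsub>G\<^esub> k) ` stab K a x \<subseteq> {g \<in> K. a g x = a g0 x}"
    unfolding stab_def using g0 x by (auto simp: act_mult mult_mem)
  show "(\<lambda>k. inv\<^bsub>G\<^esub> g0 \<otimes>\<^bsub>G\<^esub> k) ` {g \<in> K. a g x = a g0 x} \<subseteq> stab K a x"
    unfolding stab_def using g0 x by (auto simp: act_mult mult_mem inv_mem act_inv_act)
qed

lemma card_orb_mult_card_stab:
  assumes x: "x \<in> S" and fin: "finite K"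
  shows "card (orb K a x) * card (stab K a x) = card K"
proof -
  have "card K = (\<Sum>y\<in>orb K a x. card {g \<in> K. a g x = y})"
  proof -
    have "(\<Sum>y\<in>orb K a x. \<Sum>g\<in>{g \<in> K. a g x = y}. (1::nat)) = (\<Sum>g\<in>K. 1)"
      by (rule sum.group[OF fin]) (use fin in \<open>auto simp: orb_def\<close>)
    thus ?thesis by simp
  qed
  also have "\<dots> = (\<Sum>y\<in>orb K a x. card (stab K a x))"
  proof (rule sum.cong[OF refl])
    fix y assume "y \<in> orb K a x"
    then obtain g0 where "g0 \<in> K" "y = a g0 x" unfolding orb_def by blast
    thus "card {g \<in> K. a g x = y} = card (stab K a x)"
      using bij_betw_same_card[OF bij_betw_stab_transporter[OF _ x]] by simp
  qed
  finally show ?thesis by simp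
qed

lemma card_stab_bounded:
  assumes fin: "finite (orbs K a S)"
  shows "\<exists>L. \<forall>x\<in>S. card (stab K a x) \<le> L"
proof -
  have "card (stab K a x) \<le> (\<Sum>Ob\<in>orbs K a S. card (stab K a (rep Ob)))" if x: "x \<in> S" for x
  proof -
    have Ob: "orb K a x \<in> orbs K a S" unfolding orbs_def using x by blast
    obtain g where g: "g \<in> K" "rep (orb K a x) = a g x"
      using rep_mem[OF Ob] unfolding orb_def by blast
    have "card (stab K a x) = card (stab K a (rep (orb K a x)))"
      using card_stab_act[OF g(1) x] g(2) by simp
    also have "\<dots> \<le> (\<Sum>Ob\<in>orbs K a S. card (stab K a (rep Ob)))"
      by (rule member_le_sum[OF Ob _ fin]) simp
    finally show ?thesis .
  qed
  thus ?thesis by blast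
qed

lemma subgroup_action_restrict:
  assumes "subgroup K' G" "K' \<subseteq> K" "S' \<subseteq> S" "\<And>g x. g \<in> K' \<Longrightarrow> x \<in> S' \<Longrightarrow> a g x \<in> S'"
  shows "subgroup_action G K' a S'"
  using assms is_group act_one act_mult unfolding subgroup_action_def by blast

end

definition act_invariant :: "'g set \<Rightarrow> ('g \<Rightarrow> 'a \<Rightarrow> 'a) \<Rightarrow> 'a set \<Rightarrow> ('a \<Rightarrow> 'b) \<Rightarrow> bool" where
  "act_invariant K a S F \<longleftrightarrow> (\<forall>g\<in>K. \<forall>x\<in>S. F (a g x) = F x)"

definition orbit_sum :: "'g set \<Rightarrow> ('g \<Rightarrow> 'a \<Rightarrow> 'a) \<Rightarrow> 'a set \<Rightarrow> ('a \<Rightarrow> real) \<Rightarrow> real" where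
  "orbit_sum K a S F = (\<Sum>Ob\<in>orbs K a S. F (rep Ob) * invc (stab K a (rep Ob)))"

lemma act_invariant_const: "act_invariant K a S (\<lambda>_. c)"
  unfolding act_invariant_def by simp

lemma act_invariant_subset:
  "act_invariant K a S F \<Longrightarrow> K' \<subseteq> K \<Longrightarrow> S' \<subseteq> S \<Longrightarrow> act_invariant K' a S' F"
  unfolding act_invariant_def by blast

lemma kappa_graph_orbit_sum:
  "kappa_graph K av Vs ae Es alpha
     = 2 * pi * invc K - orbit_sum K av Vs (\<lambda>_. pi) + orbit_sum K ae Es (\<lambda>c. pi - alpha c)"
  unfolding kappa_graph_def orbit_sum_def by simp

lemma invc_finite: "finite A \<Longrightarrow> invc A = 1 / real (card A)"
  unfolding invc_def by simp

lemma invc_nonneg: "invc A \<ge> 0"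
  unfolding invc_def by simp

context subgroup_action
begin

lemma orbit_sum_summand:
  assumes F: "act_invariant K a S F" and Ob: "Ob \<in> orbs K a S" and x: "x \<in> Ob"
  shows "F (rep Ob) * invc (stab K a (rep Ob)) = F x * invc (stab K a x)"
proof -
  obtain z where z: "z \<in> S" "Ob = orb K a z" using Ob unfolding orbs_def by blast
  have "F y = F z" "invc (stab K a y) = invc (stab K a z)" if "y \<in> Ob" for y
    using that F z invc_stab_orb unfolding act_invariant_def orb_def by auto
  thus ?thesis using rep_mem[OF Ob] x by simp
qed

lemma finite_image_invariant:
  assumes F: "act_invariant K a S F" and fin: "finite (orbs K a S)"
  shows "finite (F ` S)"
proof (rule finite_subset)
  show "F ` S \<subseteq> (\<lambda>Ob. F (rep Ob)) ` orbs K a S"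
  proof
    fix y assume "y \<in> F ` S"
    then obtain x where x: "x \<in> S" "y = F x" by blast
    have Ob: "orb K a x \<in> orbs K a S" unfolding orbs_def using x(1) by blast
    then obtain g where "g \<in> K" "rep (orb K a x) = a g x" using rep_mem unfolding orb_def by blast
    hence "F (rep (orb K a x)) = y" using F x unfolding act_invariant_def by simp
    thus "y \<in> (\<lambda>Ob. F (rep Ob)) ` orbs K a S" using Ob by blast
  qed
qed (use fin in simp)

lemma orbit_sum_finite_group:
  assumes fin_K: "finite K" and fin_S: "finite S" and F: "act_invariant K a S F"
  shows "orbit_sum K a S F = (\<Sum>x\<in>S. F x) / real (card K)"
proof -
  have card_K: "card K > 0" using fin_K one_mem card_gt_0_iff by blast
  have orbit_total: "(\<Sum>x\<in>Ob. F x) = F (rep Ob) * invc (stab K a (rep Ob)) * real (card K)"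
    if Ob: "Ob \<in> orbs K a S" for Ob
  proof -
    have r: "rep Ob \<in> S" "orb K a (rep Ob) = Ob" using rep_in_set[OF Ob] orb_rep[OF Ob] by auto
    have "F x = F (rep Ob)" if "x \<in> Ob" for x
    proof -
      have "x \<in> orb K a (rep Ob)" using that r(2) by simp
      then obtain g where "g \<in> K" "x = a g (rep Ob)" unfolding orb_def by blast
      thus ?thesis using F r(1) unfolding act_invariant_def by simp
    qed
    hence "(\<Sum>x\<in>Ob. F x) = (\<Sum>x\<in>Ob. F (rep Ob))" by (rule sum.cong[OF refl])
    moreover have orbit_stab: "card Ob * card (stab K a (rep Ob)) = card K"
      using card_orb_mult_card_stab[OF r(1) fin_K] r(2) by simp
    moreover have "card (stab K a (rep Ob)) > 0"
      using orbit_stab card_K by (cases "card (stab K a (rep Ob))") auto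
    moreover have "finite (stab K a (rep Ob))" using fin_K unfolding stab_def by simp
    ultimately show ?thesis by (auto simp: invc_finite simp flip: orbit_stab)
  qed
  have "(\<Sum>x\<in>S. F x) = (\<Sum>Ob\<in>orbs K a S. \<Sum>x\<in>{x\<in>S. orb K a x = Ob}. F x)"
    by (rule sum.group[OF fin_S, symmetric]) (auto simp: orbs_def fin_S)
  also have "\<dots> = (\<Sum>Ob\<in>orbs K a S. F (rep Ob) * invc (stab K a (rep Ob)) * real (card K))"
  proof (rule sum.cong[OF refl])
    fix Ob assume Ob: "Ob \<in> orbs K a S"
    have "{x\<in>S. orb K a x = Ob} = Ob"
      using Ob orb_eq orb_self orb_subset unfolding orbs_def by blast
    thus "(\<Sum>x\<in>{x\<in>S. orb K a x = Ob}. F x) = F (rep Ob) * invc (stab K a (rep Ob)) * real (card K)"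
      using orbit_total[OF Ob] by simp
  qed
  also have "\<dots> = orbit_sum K a S F * real (card K)"
    unfolding orbit_sum_def by (simp add: sum_distrib_right)
  finally show ?thesis using card_K by (simp add: field_simps)
qed

end

locale equivariant_map =
  dom: subgroup_action G K a S + cod: subgroup_action G K b V
  for G :: "'g monoid" and K :: "'g set" and a :: "'g \<Rightarrow> 'a \<Rightarrow> 'a" and S :: "'a set"
    and b :: "'g \<Rightarrow> 'b \<Rightarrow> 'b" and V :: "'b set" +
  fixes p :: "'a \<Rightarrow> 'b"
  assumes map_into: "s \<in> S \<Longrightarrow> p s \<in> V"
    and map_equiv: "g \<in> K \<Longrightarrow> s \<in> S \<Longrightarrow> p (a g s) = b g (p s)"
begin

lemma stab_subset: "stab K b y \<subseteq> K"
  unfolding stab_def by blast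

lemma fiber_action: "y \<in> V \<Longrightarrow> subgroup_action G (stab K b y) a {s\<in>S. p s = y}"
  by (rule dom.subgroup_action_restrict[OF cod.stab_subgroup stab_subset])
    (auto simp: stab_def map_equiv dom.act_closed)

lemma stab_fiber_eq:
  assumes "s \<in> S" "p s = y"
  shows "stab (stab K b y) a s = stab K a s"
proof -
  have "b g y = y" if "g \<in> K" "a g s = s" for g
    using map_equiv[OF that(1) assms(1)] that(2) assms(2) by simp
  thus ?thesis unfolding stab_def by auto
qed

lemma inj_on_fiber_orbit_saturation:
  assumes y: "y \<in> V"
  shows "inj_on (\<lambda>Ob. orb K a (rep Ob)) (orbs (stab K b y) a {s\<in>S. p s = y})"
proof (rule inj_onI)
  interpret fib: subgroup_action G "stab K b y" a "{s\<in>S. p s = y}" by (rule fiber_action[OF y])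
  fix O1 O2 assume O1: "O1 \<in> orbs (stab K b y) a {s\<in>S. p s = y}"
    and O2: "O2 \<in> orbs (stab K b y) a {s\<in>S. p s = y}"
    and eq: "orb K a (rep O1) = orb K a (rep O2)"
  have s1: "rep O1 \<in> S" "p (rep O1) = y" and s2: "rep O2 \<in> S" "p (rep O2) = y"
    using fib.rep_in_set[OF O1] fib.rep_in_set[OF O2] by auto
  obtain g where g: "g \<in> K" "rep O2 = a g (rep O1)"
    using eq dom.orb_self[OF s2(1)] unfolding orb_def by auto
  have "g \<in> stab K b y" using g s1 s2 map_equiv unfolding stab_def by auto
  hence "rep O2 \<in> orb (stab K b y) a (rep O1)" using g(2) unfolding orb_def by blast
  thus "O1 = O2"
    using fib.orb_eq[of "rep O1" "rep O2"] s1 fib.orb_rep[OF O1] fib.orb_rep[OF O2] by auto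
qed

lemma fiber_orbit_saturation_image:
  assumes y: "y \<in> V"
  shows "(\<lambda>Ob. orb K a (rep Ob)) ` orbs (stab K b y) a {s\<in>S. p s = y}
       = {Q\<in>orbs K a S. orb K b (p (rep Q)) = orb K b y}"
proof (intro equalityI subsetI)
  interpret fib: subgroup_action G "stab K b y" a "{s\<in>S. p s = y}" by (rule fiber_action[OF y])
  fix Q assume "Q \<in> (\<lambda>Ob. orb K a (rep Ob)) ` orbs (stab K b y) a {s\<in>S. p s = y}"
  then obtain Ob where Ob: "Ob \<in> orbs (stab K b y) a {s\<in>S. p s = y}" "Q = orb K a (rep Ob)"
    by blast
  have s: "rep Ob \<in> S" "p (rep Ob) = y" using fib.rep_in_set[OF Ob(1)] by auto
  have Q: "Q \<in> orbs K a S" using Ob(2) s unfolding orbs_def by blast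
  obtain g where g: "g \<in> K" "rep Q = a g (rep Ob)"
    using dom.rep_mem[OF Q] Ob(2) unfolding orb_def by auto
  have "p (rep Q) = b g y" using g s map_equiv by simp
  hence "orb K b (p (rep Q)) = orb K b y" using cod.orb_act[OF g(1) y] by simp
  thus "Q \<in> {Q\<in>orbs K a S. orb K b (p (rep Q)) = orb K b y}" using Q by blast
next
  interpret fib: subgroup_action G "stab K b y" a "{s\<in>S. p s = y}" by (rule fiber_action[OF y])
  fix Q assume "Q \<in> {Q\<in>orbs K a S. orb K b (p (rep Q)) = orb K b y}"
  hence Q: "Q \<in> orbs K a S" and Qy: "orb K b (p (rep Q)) = orb K b y" by auto
  have t: "rep Q \<in> S" "orb K a (rep Q) = Q" using dom.rep_in_set[OF Q] dom.orb_rep[OF Q] by auto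
  obtain g where g: "g \<in> K" "p (rep Q) = b g y"
    using Qy cod.orb_self[OF map_into[OF t(1)]] unfolding orb_def by auto
  define s where "s = a (inv\<^bsub>G\<^esub> g) (rep Q)"
  have s: "s \<in> S" "p s = y"
    unfolding s_def using g t(1) y
    by (simp_all add: dom.act_closed dom.inv_mem map_equiv cod.act_inv_act)
  have Qs: "orb K a s = Q"
    unfolding s_def using dom.orb_act[OF dom.inv_mem[OF g(1)] t(1)] t(2) by simp
  have Ob: "orb (stab K b y) a s \<in> orbs (stab K b y) a {s\<in>S. p s = y}"
    unfolding orbs_def using s by blast
  have "orb (stab K b y) a s \<subseteq> orb K a s" unfolding orb_def using stab_subset by blast
  hence "rep (orb (stab K b y) a s) \<in> orb K a s" using fib.rep_mem[OF Ob] by blast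
  hence "orb K a (rep (orb (stab K b y) a s)) = Q" using dom.orb_eq[OF s(1)] Qs by simp
  thus "Q \<in> (\<lambda>Ob. orb K a (rep Ob)) ` orbs (stab K b y) a {s\<in>S. p s = y}"
    using Ob by blast
qed

lemma orbit_sum_fiber:
  assumes y: "y \<in> V" and F: "act_invariant K a S F"
  shows "orbit_sum (stab K b y) a {s\<in>S. p s = y} F
       = (\<Sum>Q\<in>{Q\<in>orbs K a S. orb K b (p (rep Q)) = orb K b y}. F (rep Q) * invc (stab K a (rep Q)))"
proof -
  interpret fib: subgroup_action G "stab K b y" a "{s\<in>S. p s = y}" by (rule fiber_action[OF y])
  have "orbit_sum (stab K b y) a {s\<in>S. p s = y} F
      = (\<Sum>Ob\<in>orbs (stab K b y) a {s\<in>S. p s = y}.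
           F (rep (orb K a (rep Ob))) * invc (stab K a (rep (orb K a (rep Ob)))))"
    unfolding orbit_sum_def
  proof (rule sum.cong[OF refl])
    fix Ob assume Ob: "Ob \<in> orbs (stab K b y) a {s\<in>S. p s = y}"
    have s: "rep Ob \<in> S" "p (rep Ob) = y" using fib.rep_in_set[OF Ob] by auto
    have Q: "orb K a (rep Ob) \<in> orbs K a S" unfolding orbs_def using s(1) by blast
    show "F (rep Ob) * invc (stab (stab K b y) a (rep Ob))
        = F (rep (orb K a (rep Ob))) * invc (stab K a (rep (orb K a (rep Ob))))"
      using dom.orbit_sum_summand[OF F Q dom.orb_self[OF s(1)]] stab_fiber_eq[OF s] by simp
  qed
  also have "\<dots> = (\<Sum>Q\<in>{Q\<in>orbs K a S. orb K b (p (rep Q)) = orb K b y}. F (rep Q) * invc (stab K a (rep Q)))"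
    by (rule sum.reindex_bij_betw[OF bij_betw_imageI[OF inj_on_fiber_orbit_saturation[OF y]
          fiber_orbit_saturation_image[OF y]]])
  finally show ?thesis .
qed

lemma orbit_sum_fibration:
  assumes fin_S: "finite (orbs K a S)" and fin_V: "finite (orbs K b V)"
    and F: "act_invariant K a S F"
  shows "(\<Sum>Ob\<in>orbs K b V. orbit_sum (stab K b (rep Ob)) a {s\<in>S. p s = rep Ob} F) = orbit_sum K a S F"
proof -
  have "orbit_sum K a S F
      = (\<Sum>Ob\<in>orbs K b V. \<Sum>Q\<in>{Q\<in>orbs K a S. orb K b (p (rep Q)) = Ob}. F (rep Q) * invc (stab K a (rep Q)))"
    unfolding orbit_sum_def
    by (rule sum.group[OF fin_S fin_V, symmetric]) (auto simp: orbs_def map_into dom.rep_in_set)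
  also have "\<dots> = (\<Sum>Ob\<in>orbs K b V. orbit_sum (stab K b (rep Ob)) a {s\<in>S. p s = rep Ob} F)"
    using orbit_sum_fiber[OF cod.rep_in_set F] cod.orb_rep by (intro sum.cong) auto
  finally show ?thesis ..
qed

lemma orbit_sum_transfer:
  assumes inj: "inj_on p S" and onto: "p ` S = V" and F: "act_invariant K b V F"
  shows "orbit_sum K b V F = orbit_sum K a S (\<lambda>s. F (p s))"
proof -
  have orb_image: "orb K b (p s) = p ` orb K a s" if "s \<in> S" for s
    unfolding orb_def using map_equiv that by (auto simp: image_iff)
  have orbs_image: "orbs K b V = (\<lambda>Q. p ` Q) ` orbs K a S"
    unfolding orbs_def using orb_image onto by (auto simp: image_iff)
  have inj_image: "inj_on (\<lambda>Q. p ` Q) (orbs K a S)"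
  proof (rule inj_onI)
    fix Q1 Q2 assume "Q1 \<in> orbs K a S" "Q2 \<in> orbs K a S" "p ` Q1 = p ` Q2"
    moreover have "Q \<subseteq> S" if "Q \<in> orbs K a S" for Q
      using that dom.orb_subset unfolding orbs_def by blast
    ultimately show "Q1 = Q2" using inj_on_image_eq_iff[OF inj] by metis
  qed
  have stab_eq: "stab K b (p s) = stab K a s" if s: "s \<in> S" for s
  proof -
    have "b g (p s) = p s \<longleftrightarrow> a g s = s" if g: "g \<in> K" for g
      using inj_on_eq_iff[OF inj dom.act_closed[OF g s] s] map_equiv[OF g s] by simp
    thus ?thesis unfolding stab_def by blast
  qed
  have "orbit_sum K b V F
      = (\<Sum>Q\<in>orbs K a S. F (rep (p ` Q)) * invc (stab K b (rep (p ` Q))))"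
    unfolding orbit_sum_def orbs_image by (rule sum.reindex[OF inj_image, unfolded comp_def])
  also have "\<dots> = orbit_sum K a S (\<lambda>s. F (p s))"
    unfolding orbit_sum_def
  proof (rule sum.cong[OF refl])
    fix Q assume Q: "Q \<in> orbs K a S"
    have "p ` Q \<in> orbs K b V" using Q orbs_image by blast
    moreover have "p (rep Q) \<in> p ` Q" using dom.rep_mem[OF Q] by blast
    ultimately show "F (rep (p ` Q)) * invc (stab K b (rep (p ` Q))) = F (p (rep Q)) * invc (stab K a (rep Q))"
      using cod.orbit_sum_summand[OF F] stab_eq[OF dom.rep_in_set[OF Q]] by simp
  qed
  finally show ?thesis .
qed

lemma card_fiber_in_orbit_le:
  assumes Q: "Q \<in> orbs K a S" and fin: "finite (stab K b (p (rep Q)))"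
  shows "finite {s \<in> Q. p s = y} \<and> card {s \<in> Q. p s = y} \<le> card (stab K b (p (rep Q)))"
proof (cases "{s \<in> Q. p s = y} = {}")
  case True
  show ?thesis unfolding True by simp
next
  case False
  have r: "rep Q \<in> S" "orb K a (rep Q) = Q" using dom.rep_in_set[OF Q] dom.orb_rep[OF Q] by auto
  obtain s where s: "s \<in> Q" "p s = y" using False by blast
  have "s \<in> orb K a (rep Q)" using s(1) r(2) by simp
  then obtain g0 where g0: "g0 \<in> K" "p (a g0 (rep Q)) = y"
    using s(2) unfolding orb_def by blast
  define C where "C = {g \<in> K. b g (p (rep Q)) = b g0 (p (rep Q))}"
  have sub: "{s \<in> Q. p s = y} \<subseteq> (\<lambda>g. a g (rep Q)) ` C"
  proof
    fix t assume "t \<in> {s \<in> Q. p s = y}"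
    hence t: "t \<in> orb K a (rep Q)" "p t = y" using r(2) by auto
    then obtain g where g: "g \<in> K" "t = a g (rep Q)" unfolding orb_def by blast
    hence "g \<in> C" using t(2) g0 r(1) unfolding C_def by (simp add: map_equiv)
    thus "t \<in> (\<lambda>g. a g (rep Q)) ` C" using g(2) by blast
  qed
  have "bij_betw (\<lambda>k. g0 \<otimes>\<^bsub>G\<^esub> k) (stab K b (p (rep Q))) C"
    unfolding C_def by (rule cod.bij_betw_stab_transporter[OF g0(1) map_into[OF r(1)]])
  hence C: "finite C" "card C = card (stab K b (p (rep Q)))"
    using fin by (simp_all add: bij_betw_finite bij_betw_same_card)
  have "card {s \<in> Q. p s = y} \<le> card ((\<lambda>g. a g (rep Q)) ` C)"
    using card_mono[OF finite_imageI[OF C(1)] sub] .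
  also have "\<dots> \<le> card C" by (rule card_image_le[OF C(1)])
  finally show ?thesis using finite_subset[OF sub finite_imageI[OF C(1)]] C(2) by simp
qed

lemma card_fiber_bounded:
  assumes fin_S: "finite (orbs K a S)" and fin_stab: "\<And>y. y \<in> V \<Longrightarrow> finite (stab K b y)"
  shows "\<exists>L. \<forall>y\<in>V. finite {s\<in>S. p s = y} \<and> card {s\<in>S. p s = y} \<le> L"
proof -
  define L where "L = (\<Sum>Q\<in>orbs K a S. card (stab K b (p (rep Q))))"
  have "finite {s\<in>S. p s = y} \<and> card {s\<in>S. p s = y} \<le> L" for y
  proof -
    have T: "finite {s \<in> Q. p s = y} \<and> card {s \<in> Q. p s = y} \<le> card (stab K b (p (rep Q)))"
      if "Q \<in> orbs K a S" for Q
      using card_fiber_in_orbit_le[OF that fin_stab[OF map_into[OF dom.rep_in_set[OF that]]]] .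
    have sub: "{s\<in>S. p s = y} \<subseteq> (\<Union>Q\<in>orbs K a S. {s \<in> Q. p s = y})"
      unfolding orbs_def using dom.orb_self by blast
    have fin: "finite (\<Union>Q\<in>orbs K a S. {s \<in> Q. p s = y})"
      using fin_S T by (intro finite_UN_I) auto
    have "card {s\<in>S. p s = y} \<le> card (\<Union>Q\<in>orbs K a S. {s \<in> Q. p s = y})"
      by (rule card_mono[OF fin sub])
    also have "\<dots> \<le> (\<Sum>Q\<in>orbs K a S. card {s \<in> Q. p s = y})"
      by (rule card_UN_le[OF fin_S])
    also have "\<dots> \<le> L"
      unfolding L_def using T by (intro sum_mono) auto
    finally show ?thesis using finite_subset[OF sub fin] by simp
  qed
  thus ?thesis by blast
qed

lemma finite_orbs_of_finite_fibers:
  assumes fin_V: "finite (orbs K b V)"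
    and fin_fibers: "\<And>Ob. Ob \<in> orbs K b V \<Longrightarrow> finite {s\<in>S. p s = rep Ob}"
  shows "finite (orbs K a S)"
proof (rule finite_subset)
  show "orbs K a S \<subseteq> orb K a ` (\<Union>Ob\<in>orbs K b V. {s\<in>S. p s = rep Ob})"
  proof
    fix Q assume "Q \<in> orbs K a S"
    then obtain s where s: "s \<in> S" "Q = orb K a s" unfolding orbs_def by blast
    have Ob: "orb K b (p s) \<in> orbs K b V" unfolding orbs_def using map_into[OF s(1)] by blast
    obtain g where g: "g \<in> K" "rep (orb K b (p s)) = b g (p s)"
      using cod.rep_mem[OF Ob] unfolding orb_def by blast
    have "a g s \<in> {s'\<in>S. p s' = rep (orb K b (p s))}"
      using g s(1) by (simp add: dom.act_closed map_equiv)
    moreover have "Q = orb K a (a g s)" using dom.orb_act[OF g(1) s(1)] s(2) by simp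
    ultimately show "Q \<in> orb K a ` (\<Union>Ob\<in>orbs K b V. {s\<in>S. p s = rep Ob})"
      using Ob by blast
  qed
  show "finite (orb K a ` (\<Union>Ob\<in>orbs K b V. {s\<in>S. p s = rep Ob}))"
    using fin_V fin_fibers by blast
qed

end

section \<open>Combinatorial maps\<close>

lemma int_mod_eq_imp_eq:
  assumes "(x::int) mod n = y mod n" and "\<bar>x - y\<bar> < n"
  shows "x = y"
proof (rule ccontr)
  assume "x \<noteq> y"
  moreover have "n dvd x - y" using assms(1) by (simp add: mod_eq_dvd_iff)
  ultimately have "\<bar>n\<bar> \<le> \<bar>x - y\<bar>" by (intro dvd_imp_le_int) auto
  thus False using assms(2) by simp
qed

lemma inj_on_affine_mod:
  assumes "e = 1 \<or> e = -1"
  shows "inj_on (\<lambda>i. (c + e * int i) mod int n) {..<n}"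
proof (rule inj_onI)
  fix i j assume "i \<in> {..<n}" "j \<in> {..<n}" and eq: "(c + e * int i) mod int n = (c + e * int j) mod int n"
  hence "\<bar>(c + e * int i) - (c + e * int j)\<bar> < int n" using assms by auto
  thus "i = j" using int_mod_eq_imp_eq[OF eq] assms by auto
qed

lemma dpos_unflipped_next: "n > 0 \<Longrightarrow> dpos False k n ((i + 1) mod n) = (dpos False k n i + 1) mod n"
  unfolding dpos_def by (simp add: mod_simps)

lemma dpos_flipped_next:
  "n > 0 \<Longrightarrow> dpos True k n ((i + 1) mod n) = nat ((int k - int i - 1) mod int n)"
proof -
  have "int ((i + 1) mod n) = (int i + 1) mod int n" by (simp add: of_nat_mod add.commute)
  hence "(int k - int ((i + 1) mod n)) mod int n = (int k - (int i + 1)) mod int n"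
    by (simp add: mod_diff_right_eq)
  thus ?thesis unfolding dpos_def by (simp add: algebra_simps)
qed

lemma dpos_flipped_prev:
  assumes "n > 0"
  shows "(nat ((int k - int i - 1) mod int n) + 1) mod n = dpos True k n i"
proof -
  have "int ((nat ((int k - int i - 1) mod int n) + 1) mod n)
      = ((int k - int i - 1) mod int n + 1) mod int n"
    using assms by (simp add: of_nat_mod add.commute)
  also have "\<dots> = (int k - int i) mod int n" by (simp add: mod_add_left_eq)
  finally show ?thesis unfolding dpos_def by (metis nat_int)
qed

lemma ohead_flip: "ohead X (e, \<not> s) = otail X (e, s)"
  unfolding ohead_def otail_def by auto

lemma ohead_cmorphism: "cmorphism A B m \<Longrightarrow> e \<in> cE A \<Longrightarrow> ohead B (mE m e, s) = mV m (ohead A (e, s))"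
  unfolding cmorphism_def ohead_def by auto

lemma fst_cmapC: "fst (cmapC A m c) = mF m (fst c)"
  unfolding cmapC_def by (simp add: Let_def)

lemma corners_iff: "c \<in> corners A \<longleftrightarrow> fst c \<in> cF A \<and> snd c < blen A (fst c)"
  unfolding corners_def by (cases c) auto

context
  fixes A :: "('v,'e,'f) cplx"
  assumes wf: "wf_cplx A"
begin

lemma boundary_edge_mem: "f \<in> cF A \<Longrightarrow> i < blen A f \<Longrightarrow> fst (cbd A f ! i) \<in> cE A"
  using wf unfolding wf_cplx_def blen_def by (meson image_subset_iff nth_mem)

lemma blen_pos: "f \<in> cF A \<Longrightarrow> blen A f > 0"
  using wf unfolding wf_cplx_def blen_def by auto

lemma boundary_closed: "f \<in> cF A \<Longrightarrow> i < blen A f \<Longrightarrow>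
    ohead A (cbd A f ! i) = otail A (cbd A f ! ((i + 1) mod blen A f))"
  using wf unfolding wf_cplx_def by blast

lemma vertex_mem: "e \<in> cE A \<Longrightarrow> csrc A e \<in> cV A \<and> ctgt A e \<in> cV A"
  using wf unfolding wf_cplx_def by blast

lemma endpt_mem: "fst en \<in> cE A \<Longrightarrow> endpt A en \<in> cV A"
  using vertex_mem unfolding endpt_def by auto

lemma corner_vertex_mem: "c \<in> corners A \<Longrightarrow> corner_vertex A c \<in> cV A"
  using boundary_edge_mem vertex_mem unfolding corners_iff corner_vertex_def ohead_def by auto

lemma link_ends_mem:
  assumes c: "c \<in> link_edges A y"
  shows "fst (link_ends A c) \<in> link_verts A y" "snd (link_ends A c) \<in> link_verts A y"
proof -
  obtain f i where c': "c = (f, i)" by (cases c)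
  have f: "f \<in> cF A" and i: "i < blen A f" and y: "corner_vertex A c = y"
    using c unfolding c' link_edges_def corners_iff by auto
  have i': "(i + 1) mod blen A f < blen A f" using blen_pos[OF f] by simp
  show "fst (link_ends A c) \<in> link_verts A y"
    using boundary_edge_mem[OF f i] y
    unfolding link_ends_def link_verts_def c' Let_def endpt_def corner_vertex_def ohead_def
    by (simp split: if_splits)
  show "snd (link_ends A c) \<in> link_verts A y"
    using boundary_edge_mem[OF f i'] y boundary_closed[OF f i]
    unfolding link_ends_def link_verts_def c' Let_def endpt_def corner_vertex_def
    by (simp add: otail_def)
qed

context
  fixes B :: "('w,'d,'h) cplx" and m :: "('v,'e,'f,'w,'d,'h) cmorph"
  assumes m: "cmorphism A B m"
begin

lemma cmapC_snd_less: "f \<in> cF A \<Longrightarrow> snd (cmapC A m (f, i)) < blen A f"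
  using blen_pos unfolding cmapC_def Let_def by (auto simp: nat_less_iff)

lemma cmapC_mem_corners: "c \<in> corners A \<Longrightarrow> cmapC A m c \<in> corners B"
  using m cmapC_snd_less[of "fst c" "snd c"] unfolding corners_iff cmorphism_def
  by (auto simp: cmapC_def Let_def)

lemma cmapC_boundary_unflipped:
  assumes f: "f \<in> cF A" and i: "i < blen A f" and r: "\<not> mrefl m f"
  shows "cbd B (mF m f) ! snd (cmapC A m (f, i)) = (mE m (fst (cbd A f ! i)), snd (cbd A f ! i))"
    and "cbd B (mF m f) ! ((snd (cmapC A m (f, i)) + 1) mod blen A f)
          = (mE m (fst (cbd A f ! ((i + 1) mod blen A f))), snd (cbd A f ! ((i + 1) mod blen A f)))"
proof -
  define n where "n = blen A f"
  have n: "n > 0" using blen_pos[OF f] n_def by simp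
  have M: "\<And>j. j < n \<Longrightarrow> cbd B (mF m f) ! dpos (mrefl m f) (mrot m f) n j
                        = (mE m (fst (cbd A f ! j)), snd (cbd A f ! j) \<noteq> mrefl m f)"
    using m f unfolding cmorphism_def n_def by auto
  have p: "snd (cmapC A m (f, i)) = dpos False (mrot m f) n i"
    unfolding cmapC_def dpos_def Let_def n_def using r by simp
  show "cbd B (mF m f) ! snd (cmapC A m (f, i)) = (mE m (fst (cbd A f ! i)), snd (cbd A f ! i))"
    using M[of i] i r p n_def by simp
  show "cbd B (mF m f) ! ((snd (cmapC A m (f, i)) + 1) mod blen A f)
          = (mE m (fst (cbd A f ! ((i + 1) mod blen A f))), snd (cbd A f ! ((i + 1) mod blen A f)))"
    using M[of "(i + 1) mod n"] n r p dpos_unflipped_next[OF n] n_def by simp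
qed

lemma cmapC_boundary_flipped:
  assumes f: "f \<in> cF A" and i: "i < blen A f" and r: "mrefl m f"
  shows "cbd B (mF m f) ! snd (cmapC A m (f, i))
          = (mE m (fst (cbd A f ! ((i + 1) mod blen A f))), \<not> snd (cbd A f ! ((i + 1) mod blen A f)))"
    and "cbd B (mF m f) ! ((snd (cmapC A m (f, i)) + 1) mod blen A f)
          = (mE m (fst (cbd A f ! i)), \<not> snd (cbd A f ! i))"
proof -
  define n where "n = blen A f"
  have n: "n > 0" using blen_pos[OF f] n_def by simp
  have M: "\<And>j. j < n \<Longrightarrow> cbd B (mF m f) ! dpos (mrefl m f) (mrot m f) n j
                        = (mE m (fst (cbd A f ! j)), snd (cbd A f ! j) \<noteq> mrefl m f)"
    using m f unfolding cmorphism_def n_def by auto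
  have p: "snd (cmapC A m (f, i)) = nat ((int (mrot m f) - int i - 1) mod int n)"
    unfolding cmapC_def Let_def n_def using r by simp
  show "cbd B (mF m f) ! snd (cmapC A m (f, i))
          = (mE m (fst (cbd A f ! ((i + 1) mod blen A f))), \<not> snd (cbd A f ! ((i + 1) mod blen A f)))"
    using M[of "(i + 1) mod n"] n r p dpos_flipped_next[OF n] n_def by simp
  show "cbd B (mF m f) ! ((snd (cmapC A m (f, i)) + 1) mod blen A f)
          = (mE m (fst (cbd A f ! i)), \<not> snd (cbd A f ! i))"
    using M[of i] i r p dpos_flipped_prev[OF n] n_def by simp
qed

lemma corner_vertex_cmapC:
  assumes c: "c \<in> corners A"
  shows "corner_vertex B (cmapC A m c) = mV m (corner_vertex A c)"
proof -
  obtain f i where c': "c = (f, i)" by (cases c)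
  have f: "f \<in> cF A" and i: "i < blen A f" using c unfolding c' corners_iff by auto
  have i': "(i + 1) mod blen A f < blen A f" using blen_pos[OF f] by simp
  define e0 where "e0 = cbd A f ! i"
  define e1 where "e1 = cbd A f ! ((i + 1) mod blen A f)"
  have cv: "corner_vertex B (cmapC A m (f, i)) = ohead B (cbd B (mF m f) ! snd (cmapC A m (f, i)))"
    unfolding corner_vertex_def fst_cmapC by simp
  show ?thesis
  proof (cases "mrefl m f")
    case True
    have "corner_vertex B (cmapC A m (f, i)) = ohead B (mE m (fst e1), \<not> snd e1)"
      unfolding cv cmapC_boundary_flipped(1)[OF f i True] e1_def ..
    also have "\<dots> = mV m (ohead A (fst e1, \<not> snd e1))"
      by (rule ohead_cmorphism[OF m boundary_edge_mem[OF f i'], folded e1_def])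
    also have "\<dots> = mV m (otail A e1)" unfolding ohead_flip by simp
    also have "\<dots> = mV m (ohead A e0)"
      unfolding e0_def e1_def boundary_closed[OF f i] ..
    finally show ?thesis unfolding c' corner_vertex_def e0_def by simp
  next
    case False
    have "corner_vertex B (cmapC A m (f, i)) = ohead B (mE m (fst e0), snd e0)"
      unfolding cv cmapC_boundary_unflipped(1)[OF f i False] e0_def ..
    also have "\<dots> = mV m (ohead A e0)"
      using ohead_cmorphism[OF m boundary_edge_mem[OF f i], of "snd e0", folded e0_def] by simp
    finally show ?thesis unfolding c' corner_vertex_def e0_def by simp
  qed
qed

lemma link_ends_cmapC:
  assumes c: "c \<in> corners A"
  shows "link_ends B (cmapC A m c) = (if mrefl m (fst c)
            then (cmapEnd m (snd (link_ends A c)), cmapEnd m (fst (link_ends A c)))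
            else (cmapEnd m (fst (link_ends A c)), cmapEnd m (snd (link_ends A c))))"
proof -
  obtain f i where c': "c = (f, i)" by (cases c)
  have f: "f \<in> cF A" and i: "i < blen A f" using c unfolding c' corners_iff by auto
  have blen: "blen B (mF m f) = blen A f" using m f unfolding cmorphism_def by auto
  have link_ends_image: "link_ends B (cmapC A m (f, i))
      = ((fst (cbd B (mF m f) ! snd (cmapC A m (f, i))), \<not> snd (cbd B (mF m f) ! snd (cmapC A m (f, i)))),
         cbd B (mF m f) ! ((snd (cmapC A m (f, i)) + 1) mod blen A f))"
    unfolding link_ends_def Let_def fst_cmapC fst_conv blen ..
  have link_ends_face: "link_ends A (f, i)
      = ((fst (cbd A f ! i), \<not> snd (cbd A f ! i)), cbd A f ! ((i + 1) mod blen A f))"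
    unfolding link_ends_def Let_def fst_conv snd_conv ..
  show ?thesis
  proof (cases "mrefl m f")
    case True
    show ?thesis
      unfolding c' fst_conv if_P[OF True] link_ends_image link_ends_face
        cmapC_boundary_flipped[OF f i True] cmapEnd_def
      by simp
  next
    case False
    define p where "p = snd (cmapC A m (f, i))"
    have b0: "cbd B (mF m f) ! p = (mE m (fst (cbd A f ! i)), snd (cbd A f ! i))"
      and b1: "cbd B (mF m f) ! ((p + 1) mod blen A f)
          = (mE m (fst (cbd A f ! ((i + 1) mod blen A f))), snd (cbd A f ! ((i + 1) mod blen A f)))"
      unfolding p_def by (rule cmapC_boundary_unflipped[OF f i False])+
    show ?thesis
      unfolding c' fst_conv if_not_P[OF False] link_ends_image link_ends_face
        p_def[symmetric] b0 b1 cmapEnd_def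
      by (simp only: fst_conv snd_conv)
  qed
qed

lemma cmapEnd_mem: "fst en \<in> cE A \<Longrightarrow> fst (cmapEnd m en) \<in> cE B"
  and endpt_cmapEnd: "fst en \<in> cE A \<Longrightarrow> endpt B (cmapEnd m en) = mV m (endpt A en)"
  using m unfolding cmorphism_def cmapEnd_def endpt_def by auto

lemma kappa_face_cmapC:
  assumes f: "f \<in> cF A"
  shows "kappa_face B ang (mF m f) = kappa_face A (\<lambda>c. ang (cmapC A m c)) f"
proof -
  define n where "n = blen A f"
  define h where "h i = snd (cmapC A m (f, i))" for i
  define e :: int where "e = (if mrefl m f then -1 else 1)"
  define c :: int where "c = (if mrefl m f then int (mrot m f) - 1 else int (mrot m f))"
  have h_int: "int (h i) = (c + e * int i) mod int n" for i
    using blen_pos[OF f] unfolding h_def cmapC_def Let_def n_def c_def e_def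
    by (simp add: of_nat_mod algebra_simps)
  have "inj_on h {..<n}"
  proof (rule inj_onI)
    fix i j assume ij: "i \<in> {..<n}" "j \<in> {..<n}" "h i = h j"
    have eq: "(c + e * int i) mod int n = (c + e * int j) mod int n"
      using h_int[of i] h_int[of j] ij(3) by simp
    have e: "e = 1 \<or> e = -1" unfolding e_def by simp
    show "i = j" by (rule inj_onD[OF inj_on_affine_mod[OF e] eq ij(1,2)])
  qed
  moreover have "h ` {..<n} \<subseteq> {..<n}" using cmapC_snd_less[OF f] unfolding h_def n_def by auto
  ultimately have "bij_betw h {..<n} {..<n}"
    unfolding bij_betw_def using endo_inj_surj by blast
  hence "(\<Sum>i<n. ang (mF m f, h i)) = (\<Sum>j<n. ang (mF m f, j))"
    by (rule sum.reindex_bij_betw)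
  moreover have "cmapC A m (f, i) = (mF m f, h i)" for i
    unfolding h_def cmapC_def by (simp add: Let_def)
  moreover have "blen B (mF m f) = n" using m f unfolding cmorphism_def n_def by auto
  ultimately show ?thesis unfolding kappa_face_def n_def by simp
qed

end

end

section \<open>Actions on complexes and the Gauss--Bonnet theorem\<close>

definition cEnds :: "('v,'e,'f) cplx \<Rightarrow> ('e \<times> bool) set" where
  "cEnds X = {en. fst en \<in> cE X}"

lemma link_verts_eq: "link_verts X y = {en \<in> cEnds X. endpt X en = y}"
  unfolding link_verts_def cEnds_def by auto

lemma link_edges_eq: "link_edges X y = {c \<in> corners X. corner_vertex X c = y}"
  unfolding link_edges_def by auto

locale complex_action =
  fixes G :: "'g monoid" and K :: "'g set"
    and act :: "'g \<Rightarrow> ('v,'e,'f,'v,'e,'f) cmorph" and X :: "('v,'e,'f) cplx"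
  assumes is_group: "group G"
    and is_subgroup: "subgroup K G"
    and wf: "wf_cplx X"
    and cmorphism_act: "g \<in> K \<Longrightarrow> cmorphism X X (act g)"
    and one_V: "v \<in> cV X \<Longrightarrow> mV (act \<one>\<^bsub>G\<^esub>) v = v"
    and one_E: "e \<in> cE X \<Longrightarrow> mE (act \<one>\<^bsub>G\<^esub>) e = e"
    and one_F: "f \<in> cF X \<Longrightarrow> mF (act \<one>\<^bsub>G\<^esub>) f = f"
    and one_C: "c \<in> corners X \<Longrightarrow> cmapC X (act \<one>\<^bsub>G\<^esub>) c = c"
    and mult_V: "g \<in> K \<Longrightarrow> h \<in> K \<Longrightarrow> v \<in> cV X \<Longrightarrow>
      mV (act (g \<otimes>\<^bsub>G\<^esub> h)) v = mV (act g) (mV (act h) v)"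
    and mult_E: "g \<in> K \<Longrightarrow> h \<in> K \<Longrightarrow> e \<in> cE X \<Longrightarrow>
      mE (act (g \<otimes>\<^bsub>G\<^esub> h)) e = mE (act g) (mE (act h) e)"
    and mult_F: "g \<in> K \<Longrightarrow> h \<in> K \<Longrightarrow> f \<in> cF X \<Longrightarrow>
      mF (act (g \<otimes>\<^bsub>G\<^esub> h)) f = mF (act g) (mF (act h) f)"
    and mult_C: "g \<in> K \<Longrightarrow> h \<in> K \<Longrightarrow> c \<in> corners X \<Longrightarrow>
      cmapC X (act (g \<otimes>\<^bsub>G\<^esub> h)) c = cmapC X (act g) (cmapC X (act h) c)"

lemma group_cact_complex_action: "group_cact G act X \<Longrightarrow> complex_action G (carrier G) act X"
  unfolding group_cact_def complex_action_def using group.subgroup_self by blast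

lemma group_cact_subgroup_complex_action:
  "group G \<Longrightarrow> subgroup H G \<Longrightarrow> group_cact (G\<lparr>carrier := H\<rparr>) act Y \<Longrightarrow> complex_action G H act Y"
  unfolding group_cact_def complex_action_def by simp

context complex_action
begin

lemma action_V: "subgroup_action G K (actV act) (cV X)"
  using is_group is_subgroup cmorphism_act one_V mult_V
  unfolding subgroup_action_def actV_def cmorphism_def by blast

lemma action_E: "subgroup_action G K (actE act) (cE X)"
  using is_group is_subgroup cmorphism_act one_E mult_E
  unfolding subgroup_action_def actE_def cmorphism_def by blast

lemma action_F: "subgroup_action G K (actF act) (cF X)"
  using is_group is_subgroup cmorphism_act one_F mult_F
  unfolding subgroup_action_def actF_def cmorphism_def by blast

lemma action_ends: "subgroup_action G K (actEnd act) (cEnds X)"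
  using is_group is_subgroup cmorphism_act one_E mult_E
  unfolding subgroup_action_def actEnd_def cmorphism_def cEnds_def cmapEnd_def by auto

lemma action_corners: "subgroup_action G K (actC X act) (corners X)"
  using is_group is_subgroup cmapC_mem_corners[OF wf cmorphism_act] one_C mult_C
  unfolding subgroup_action_def actC_def by blast

lemma endpt_equivariant: "equivariant_map G K (actEnd act) (cEnds X) (actV act) (cV X) (endpt X)"
  using action_ends action_V endpt_mem[OF wf] endpt_cmapEnd[OF wf cmorphism_act]
  unfolding equivariant_map_def equivariant_map_axioms_def cEnds_def actEnd_def actV_def by blast

lemma edge_of_end_equivariant: "equivariant_map G K (actEnd act) (cEnds X) (actE act) (cE X) fst"
  using action_ends action_E
  unfolding equivariant_map_def equivariant_map_axioms_def cEnds_def actEnd_def actE_def cmapEnd_def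
  by auto

lemma corner_vertex_equivariant:
  "equivariant_map G K (actC X act) (corners X) (actV act) (cV X) (corner_vertex X)"
  using action_corners action_V corner_vertex_mem[OF wf] corner_vertex_cmapC[OF wf cmorphism_act]
  unfolding equivariant_map_def equivariant_map_axioms_def actC_def actV_def by blast

lemma face_of_corner_equivariant: "equivariant_map G K (actC X act) (corners X) (actF act) (cF X) fst"
  using action_corners action_F
  unfolding equivariant_map_def equivariant_map_axioms_def actC_def actF_def
  by (auto simp: corners_iff fst_cmapC)

lemma ends_of_edge: "e \<in> cE X \<Longrightarrow> {en \<in> cEnds X. fst en = e} = {(e, True), (e, False)}"
  unfolding cEnds_def by auto

lemma corners_of_face: "f \<in> cF X \<Longrightarrow> {c \<in> corners X. fst c = f} = (\<lambda>i. (f, i)) ` {..<blen X f}"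
  unfolding corners_def by auto

lemma finite_orbs_ends: "finite (orbs K (actE act) (cE X)) \<Longrightarrow> finite (orbs K (actEnd act) (cEnds X))"
  using equivariant_map.finite_orbs_of_finite_fibers[OF edge_of_end_equivariant]
    subgroup_action.rep_in_set[OF action_E] ends_of_edge by simp

lemma finite_orbs_corners: "finite (orbs K (actF act) (cF X)) \<Longrightarrow> finite (orbs K (actC X act) (corners X))"
  using equivariant_map.finite_orbs_of_finite_fibers[OF face_of_corner_equivariant]
    subgroup_action.rep_in_set[OF action_F] corners_of_face by simp

end

context complex_action
begin

lemma orbit_sum_link_verts:
  assumes proper: "proper_act K X act" and cocompact: "cocompact_act K X act"
  shows "(\<Sum>v\<in>orbs K (actV act) (cV X).
            orbit_sum (stab K (actV act) (rep v)) (actEnd act) (link_verts X (rep v)) (\<lambda>_. pi))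
       = 2 * pi * (\<Sum>Ob\<in>orbs K (actE act) (cE X). invc (stab K (actE act) (rep Ob)))"
proof -
  interpret at_vertex: equivariant_map G K "actEnd act" "cEnds X" "actV act" "cV X" "endpt X"
    by (rule endpt_equivariant)
  interpret at_edge: equivariant_map G K "actEnd act" "cEnds X" "actE act" "cE X" fst
    by (rule edge_of_end_equivariant)
  have fin: "finite (orbs K (actV act) (cV X))" "finite (orbs K (actE act) (cE X))"
    "finite (orbs K (actEnd act) (cEnds X))"
    using cocompact finite_orbs_ends unfolding cocompact_act_def by auto
  have "(\<Sum>v\<in>orbs K (actV act) (cV X).
            orbit_sum (stab K (actV act) (rep v)) (actEnd act) (link_verts X (rep v)) (\<lambda>_. pi))
      = (\<Sum>Ob\<in>orbs K (actE act) (cE X).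
            orbit_sum (stab K (actE act) (rep Ob)) (actEnd act) {en \<in> cEnds X. fst en = rep Ob} (\<lambda>_. pi))"
    unfolding link_verts_eq
    using at_vertex.orbit_sum_fibration[OF fin(3,1) act_invariant_const]
      at_edge.orbit_sum_fibration[OF fin(3,2) act_invariant_const] by simp
  also have "\<dots> = (\<Sum>Ob\<in>orbs K (actE act) (cE X). 2 * pi * invc (stab K (actE act) (rep Ob)))"
  proof (rule sum.cong[OF refl])
    fix Ob assume "Ob \<in> orbs K (actE act) (cE X)"
    hence e: "rep Ob \<in> cE X" by (rule at_edge.cod.rep_in_set)
    interpret fib: subgroup_action G "stab K (actE act) (rep Ob)" "actEnd act" "{en \<in> cEnds X. fst en = rep Ob}"
      by (rule at_edge.fiber_action[OF e])
    have "finite (stab K (actE act) (rep Ob))" using proper e unfolding proper_act_def by blast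
    thus "orbit_sum (stab K (actE act) (rep Ob)) (actEnd act) {en \<in> cEnds X. fst en = rep Ob} (\<lambda>_. pi)
        = 2 * pi * invc (stab K (actE act) (rep Ob))"
      using fib.orbit_sum_finite_group[OF _ _ act_invariant_const] ends_of_edge[OF e]
      by (simp add: invc_finite)
  qed
  finally show ?thesis by (simp add: sum_distrib_left)
qed

lemma orbit_sum_link_edges:
  assumes proper: "proper_act K X act" and cocompact: "cocompact_act K X act"
    and ang: "act_invariant K (actC X act) (corners X) ang"
  shows "(\<Sum>v\<in>orbs K (actV act) (cV X).
            orbit_sum (stab K (actV act) (rep v)) (actC X act) (link_edges X (rep v)) (\<lambda>c. pi - ang c))
       = (\<Sum>Ob\<in>orbs K (actF act) (cF X).
            (2 * pi - kappa_face X ang (rep Ob)) * invc (stab K (actF act) (rep Ob)))"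
proof -
  interpret at_vertex: equivariant_map G K "actC X act" "corners X" "actV act" "cV X" "corner_vertex X"
    by (rule corner_vertex_equivariant)
  interpret at_face: equivariant_map G K "actC X act" "corners X" "actF act" "cF X" fst
    by (rule face_of_corner_equivariant)
  have fin: "finite (orbs K (actV act) (cV X))" "finite (orbs K (actF act) (cF X))"
    "finite (orbs K (actC X act) (corners X))"
    using cocompact finite_orbs_corners unfolding cocompact_act_def by auto
  have inv: "act_invariant K (actC X act) (corners X) (\<lambda>c. pi - ang c)"
    using ang unfolding act_invariant_def by simp
  have "(\<Sum>v\<in>orbs K (actV act) (cV X).
            orbit_sum (stab K (actV act) (rep v)) (actC X act) (link_edges X (rep v)) (\<lambda>c. pi - ang c))
      = (\<Sum>Ob\<in>orbs K (actF act) (cF X).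
            orbit_sum (stab K (actF act) (rep Ob)) (actC X act) {c \<in> corners X. fst c = rep Ob} (\<lambda>c. pi - ang c))"
    unfolding link_edges_eq
    using at_vertex.orbit_sum_fibration[OF fin(3,1) inv] at_face.orbit_sum_fibration[OF fin(3,2) inv]
    by simp
  also have "\<dots> = (\<Sum>Ob\<in>orbs K (actF act) (cF X).
            (2 * pi - kappa_face X ang (rep Ob)) * invc (stab K (actF act) (rep Ob)))"
  proof (rule sum.cong[OF refl])
    fix Ob assume "Ob \<in> orbs K (actF act) (cF X)"
    hence f: "rep Ob \<in> cF X" by (rule at_face.cod.rep_in_set)
    interpret fib: subgroup_action G "stab K (actF act) (rep Ob)" "actC X act" "{c \<in> corners X. fst c = rep Ob}"
      by (rule at_face.fiber_action[OF f])
    have fin_stab: "finite (stab K (actF act) (rep Ob))" using proper f unfolding proper_act_def by blast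
    have fib_inv: "act_invariant (stab K (actF act) (rep Ob)) (actC X act) {c \<in> corners X. fst c = rep Ob}
        (\<lambda>c. pi - ang c)"
      by (rule act_invariant_subset[OF inv]) (auto simp: stab_def)
    have "(\<Sum>c\<in>{c \<in> corners X. fst c = rep Ob}. pi - ang c) = (\<Sum>i<blen X (rep Ob). pi - ang (rep Ob, i))"
      unfolding corners_of_face[OF f] by (subst sum.reindex) (auto simp: inj_on_def)
    also have "\<dots> = 2 * pi - kappa_face X ang (rep Ob)"
      unfolding kappa_face_def by (simp add: sum_subtractf algebra_simps)
    finally show "orbit_sum (stab K (actF act) (rep Ob)) (actC X act) {c \<in> corners X. fst c = rep Ob}
        (\<lambda>c. pi - ang c) = (2 * pi - kappa_face X ang (rep Ob)) * invc (stab K (actF act) (rep Ob))"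
      using fib.orbit_sum_finite_group[OF fin_stab _ fib_inv] corners_of_face[OF f]
      by (simp add: invc_finite[OF fin_stab])
  qed
  finally show ?thesis .
qed

theorem gauss_bonnet:
  assumes proper: "proper_act K X act" and cocompact: "cocompact_act K X act"
    and ang: "act_invariant K (actC X act) (corners X) ang"
  shows "(\<Sum>v\<in>orbs K (actV act) (cV X). kappa_vertex K X act ang v)
       = 2 * pi * euler_char K X act
         - (\<Sum>Ob\<in>orbs K (actF act) (cF X). kappa_face X ang (rep Ob) * invc (stab K (actF act) (rep Ob)))"
proof -
  have "(\<Sum>v\<in>orbs K (actV act) (cV X). kappa_vertex K X act ang v)
     = 2 * pi * (\<Sum>v\<in>orbs K (actV act) (cV X). invc (stab K (actV act) (rep v)))
       - (\<Sum>v\<in>orbs K (actV act) (cV X).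
            orbit_sum (stab K (actV act) (rep v)) (actEnd act) (link_verts X (rep v)) (\<lambda>_. pi))
       + (\<Sum>v\<in>orbs K (actV act) (cV X).
            orbit_sum (stab K (actV act) (rep v)) (actC X act) (link_edges X (rep v)) (\<lambda>c. pi - ang c))"
    unfolding kappa_vertex_def Let_def kappa_graph_orbit_sum
    by (simp add: sum.distrib sum_subtractf sum_distrib_left)
  thus ?thesis
    unfolding orbit_sum_link_verts[OF proper cocompact] orbit_sum_link_edges[OF proper cocompact ang]
      euler_char_def
    by (simp add: algebra_simps sum_subtractf sum_distrib_left sum.distrib)
qed

end

section \<open>Finiteness of the curvature values of sections\<close>

definition bounded_sums :: "nat \<Rightarrow> real set \<Rightarrow> real set" where
  "bounded_sums M T = {s. \<exists>m t. m \<le> M \<and> (\<forall>i<m. t i \<in> T) \<and> s = (\<Sum>i<m. t i)}"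

lemma finite_bounded_sums:
  assumes "finite T"
  shows "finite (bounded_sums M T)"
proof (rule finite_subset)
  show "bounded_sums M T \<subseteq> (\<Union>m\<in>{..M}. (\<lambda>t. \<Sum>i<m. t i) ` PiE {..<m} (\<lambda>_. T))"
  proof
    fix s assume "s \<in> bounded_sums M T"
    then obtain m t where mt: "m \<le> M" "\<forall>i<m. t i \<in> T" "s = (\<Sum>i<m. t i)"
      unfolding bounded_sums_def by blast
    hence "restrict t {..<m} \<in> PiE {..<m} (\<lambda>_. T)" "s = (\<Sum>i<m. restrict t {..<m} i)" by auto
    thus "s \<in> (\<Union>m\<in>{..M}. (\<lambda>t. \<Sum>i<m. t i) ` PiE {..<m} (\<lambda>_. T))" using mt(1) by blast
  qed
  show "finite (\<Union>m\<in>{..M}. (\<lambda>t. \<Sum>i<m. t i) ` PiE {..<m} (\<lambda>_. T))"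
    using assms by (intro finite_UN_I finite_imageI finite_PiE) auto
qed

lemma sum_mem_bounded_sums:
  assumes fin: "finite A" and card: "card A \<le> M" and h: "\<And>a. a \<in> A \<Longrightarrow> h a \<in> T"
  shows "(\<Sum>a\<in>A. h a) \<in> bounded_sums M T"
proof -
  obtain g where g: "bij_betw g {..<card A} A"
    using ex_bij_betw_nat_finite[OF fin] by (auto simp: atLeast0LessThan)
  have "(\<Sum>a\<in>A. h a) = (\<Sum>i<card A. h (g i))" using sum.reindex_bij_betw[OF g, of h] by simp
  moreover have "\<forall>i<card A. h (g i) \<in> T" using g h unfolding bij_betw_def by auto
  ultimately show ?thesis
    unfolding bounded_sums_def using card by (intro CollectI exI[of _ "card A"] exI[of _ "\<lambda>i. h (g i)"]) simp
qed

definition inverse_range :: "nat \<Rightarrow> real set" where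
  "inverse_range L = (\<lambda>n. 1 / real n) ` {..L}"

lemma invc_mem_inverse_range: "finite A \<Longrightarrow> card A \<le> L \<Longrightarrow> invc A \<in> inverse_range L"
  unfolding invc_def inverse_range_def by simp

definition kappa_range :: "nat \<Rightarrow> nat \<Rightarrow> nat \<Rightarrow> real set \<Rightarrow> real set" where
  "kappa_range Ls Lv Le A =
     (\<lambda>(r, s, t). 2 * pi * r - s + t) `
       (inverse_range Ls \<times> bounded_sums Lv ((\<lambda>r. pi * r) ` inverse_range Ls)
         \<times> bounded_sums Le ((\<lambda>(a, r). (pi - a) * r) ` (A \<times> inverse_range Ls)))"

lemma finite_kappa_range: "finite A \<Longrightarrow> finite (kappa_range Ls Lv Le A)"
  unfolding kappa_range_def inverse_range_def
  by (intro finite_imageI finite_cartesian_product finite_bounded_sums) auto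

lemma card_orbs_le: "finite S \<Longrightarrow> card (orbs K a S) \<le> card S"
  unfolding orbs_def by (rule card_image_le)

lemma kappa_graph_mem_kappa_range:
  assumes K: "finite K" "card K \<le> Ls" "K \<noteq> {}"
    and Vs: "finite Vs" "card Vs \<le> Lv"
    and Es: "finite Es" "card Es \<le> Le" "\<And>g c. g \<in> K \<Longrightarrow> c \<in> Es \<Longrightarrow> ae g c \<in> Es"
    and alpha: "alpha ` Es \<subseteq> A"
  shows "kappa_graph K av Vs ae Es alpha \<in> kappa_range Ls Lv Le A"
proof -
  have invc_mem: "invc B \<in> inverse_range Ls" if B: "B \<subseteq> K" for B
    by (rule invc_mem_inverse_range[OF finite_subset[OF B K(1)] le_trans[OF card_mono[OF K(1) B] K(2)]])
  have stab_sub: "stab K a z \<subseteq> K" for a :: "_ \<Rightarrow> 'z \<Rightarrow> 'z" and z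
    unfolding stab_def by blast
  define vertex_term where "vertex_term = (\<Sum>Ob\<in>orbs K av Vs. pi * invc (stab K av (rep Ob)))"
  define edge_term where "edge_term = (\<Sum>Ob\<in>orbs K ae Es. (pi - alpha (rep Ob)) * invc (stab K ae (rep Ob)))"
  have vertex_term: "vertex_term \<in> bounded_sums Lv ((\<lambda>r. pi * r) ` inverse_range Ls)"
    unfolding vertex_term_def
  proof (rule sum_mem_bounded_sums)
    show "finite (orbs K av Vs)" using Vs(1) unfolding orbs_def by simp
    show "card (orbs K av Vs) \<le> Lv" by (rule le_trans[OF card_orbs_le[OF Vs(1)] Vs(2)])
    fix Ob
    show "pi * invc (stab K av (rep Ob)) \<in> (\<lambda>r. pi * r) ` inverse_range Ls"
      by (rule imageI[OF invc_mem[OF stab_sub]])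
  qed
  have edge_term: "edge_term \<in> bounded_sums Le ((\<lambda>(a, r). (pi - a) * r) ` (A \<times> inverse_range Ls))"
    unfolding edge_term_def
  proof (rule sum_mem_bounded_sums)
    show "finite (orbs K ae Es)" using Es(1) unfolding orbs_def by simp
    show "card (orbs K ae Es) \<le> Le" by (rule le_trans[OF card_orbs_le[OF Es(1)] Es(2)])
    fix Ob assume "Ob \<in> orbs K ae Es"
    then obtain c where c: "c \<in> Es" "Ob = (\<lambda>g. ae g c) ` K" unfolding orbs_def orb_def by blast
    have "rep Ob \<in> Ob" using K(3) c(2) by (intro rep_mem_nonempty) simp
    then obtain g where "g \<in> K" "rep Ob = ae g c" using c(2) by blast
    hence "alpha (rep Ob) \<in> A" using Es(3) c(1) alpha by auto
    hence "(alpha (rep Ob), invc (stab K ae (rep Ob))) \<in> A \<times> inverse_range Ls"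
      using invc_mem[OF stab_sub] by simp
    thus "(pi - alpha (rep Ob)) * invc (stab K ae (rep Ob))
        \<in> (\<lambda>(a, r). (pi - a) * r) ` (A \<times> inverse_range Ls)"
      by (rule rev_image_eqI) simp
  qed
  have "kappa_graph K av Vs ae Es alpha = (\<lambda>(r, s, t). 2 * pi * r - s + t) (invc K, vertex_term, edge_term)"
    unfolding kappa_graph_def vertex_term_def edge_term_def by simp
  moreover have "(invc K, vertex_term, edge_term) \<in> inverse_range Ls \<times> bounded_sums Lv ((\<lambda>r. pi * r) ` inverse_range Ls)
      \<times> bounded_sums Le ((\<lambda>(a, r). (pi - a) * r) ` (A \<times> inverse_range Ls))"
    using invc_mem[OF order_refl] vertex_term edge_term by simp
  ultimately show ?thesis unfolding kappa_range_def by (rule image_eqI)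
qed

context complex_action
begin

lemma link_card_bounded:
  assumes proper: "proper_act K X act" and cocompact: "cocompact_act K X act"
  shows "\<exists>L. \<forall>x\<in>cV X. finite (link_verts X x) \<and> card (link_verts X x) \<le> L
                  \<and> finite (link_edges X x) \<and> card (link_edges X x) \<le> L"
proof -
  have fin_stab: "\<And>x. x \<in> cV X \<Longrightarrow> finite (stab K (actV act) x)"
    using proper unfolding proper_act_def by blast
  have fin: "finite (orbs K (actEnd act) (cEnds X))" "finite (orbs K (actC X act) (corners X))"
    using cocompact finite_orbs_ends finite_orbs_corners unfolding cocompact_act_def by auto
  obtain L1 where L1: "\<forall>x\<in>cV X. finite (link_verts X x) \<and> card (link_verts X x) \<le> L1"
    using equivariant_map.card_fiber_bounded[OF endpt_equivariant fin(1) fin_stab]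
    unfolding link_verts_eq by blast
  obtain L2 where L2: "\<forall>x\<in>cV X. finite (link_edges X x) \<and> card (link_edges X x) \<le> L2"
    using equivariant_map.card_fiber_bounded[OF corner_vertex_equivariant fin(2) fin_stab]
    unfolding link_edges_eq by blast
  have "\<forall>x\<in>cV X. finite (link_verts X x) \<and> card (link_verts X x) \<le> max L1 L2
                  \<and> finite (link_edges X x) \<and> card (link_edges X x) \<le> max L1 L2"
    using L1 L2 by (simp add: le_max_iff_disj)
  thus ?thesis by blast
qed

end

text \<open>Finiteness is what makes the Max in Bminus and Bplus an actual maximum.\<close>

lemma finite_Bvals:
  assumes act: "complex_action G (carrier G) act X"
    and proper: "proper_act (carrier G) X act" and cocompact: "cocompact_act (carrier G) X act"
    and ang: "act_invariant (carrier G) (actC X act) (corners X) ang"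
  shows "finite (Bvals G X act ang)"
proof -
  interpret complex_action G "carrier G" act X by (rule act)
  obtain L where L: "\<forall>x\<in>cV X. finite (link_verts X x) \<and> card (link_verts X x) \<le> L
                  \<and> finite (link_edges X x) \<and> card (link_edges X x) \<le> L"
    using link_card_bounded[OF proper cocompact] by blast
  obtain Ls where Ls: "\<forall>x\<in>cV X. card (stab (carrier G) (actV act) x) \<le> Ls"
    using subgroup_action.card_stab_bounded[OF action_V] cocompact unfolding cocompact_act_def by blast
  have "Bvals G X act ang \<subseteq> kappa_range Ls L L (ang ` corners X)"
  proof
    fix k assume "k \<in> Bvals G X act ang"
    then obtain x K Vs Es where k: "k = kappa_graph K (actEnd act) Vs (actC X act) Es ang"
      and x: "x \<in> cV X" and K: "subgroup K G" "K \<subseteq> stab (carrier G) (actV act) x"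
      and sec: "is_section X act K x Vs Es"
      unfolding Bvals_def by blast
    have fin_stab: "finite (stab (carrier G) (actV act) x)" using proper x unfolding proper_act_def by blast
    have sub: "Vs \<subseteq> link_verts X x" "Es \<subseteq> link_edges X x" using sec unfolding is_section_def by auto
    show "k \<in> kappa_range Ls L L (ang ` corners X)"
      unfolding k
    proof (rule kappa_graph_mem_kappa_range)
      show "finite K" "card K \<le> Ls"
        using K(2) fin_stab Ls x finite_subset card_mono le_trans by metis+
      show "K \<noteq> {}" using subgroup.one_closed[OF K(1)] by blast
      show "finite Vs" "card Vs \<le> L" "finite Es" "card Es \<le> L"
        using sub L x finite_subset card_mono le_trans by metis+
      show "\<And>g c. g \<in> K \<Longrightarrow> c \<in> Es \<Longrightarrow> actC X act g c \<in> Es"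
        using sec unfolding is_section_def by blast
      show "ang ` Es \<subseteq> ang ` corners X" using sub(2) unfolding link_edges_def by blast
    qed
  qed
  moreover have "finite (ang ` corners X)"
    using subgroup_action.finite_image_invariant[OF action_corners ang] finite_orbs_corners cocompact
    unfolding cocompact_act_def by blast
  ultimately show ?thesis using finite_kappa_range finite_subset by blast
qed

lemma Bminus_neg: "finite (Bvals G X act ang) \<Longrightarrow> Bminus G X act ang < 0"
  unfolding Bminus_def Let_def by auto

lemma le_Bminus:
  "finite (Bvals G X act ang) \<Longrightarrow> k \<in> Bvals G X act ang \<Longrightarrow> k < 0 \<Longrightarrow> k \<le> Bminus G X act ang"
  unfolding Bminus_def Let_def by auto

lemma le_Bplus:
  "finite (Bvals G X act ang) \<Longrightarrow> k \<in> Bvals G X act ang \<Longrightarrow> k \<ge> 0 \<Longrightarrow> k \<le> Bplus G X act ang"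
  unfolding Bplus_def Let_def by auto

lemma sum_le_sign_bounds:
  fixes k :: "'a \<Rightarrow> real"
  assumes fin: "finite I"
    and neg: "\<And>i. i \<in> I \<Longrightarrow> k i < 0 \<Longrightarrow> k i \<le> bm"
    and pos: "\<And>i. i \<in> I \<Longrightarrow> k i > 0 \<Longrightarrow> k i \<le> bp"
  shows "(\<Sum>i\<in>I. k i) \<le> real (card {i\<in>I. k i < 0}) * bm + real (card {i\<in>I. k i > 0}) * bp"
proof -
  have "(\<Sum>i\<in>I. k i) \<le> (\<Sum>i\<in>I. (if k i < 0 then bm else 0) + (if k i > 0 then bp else 0))"
    using neg pos by (intro sum_mono) auto
  also have "\<dots> = real (card {i\<in>I. k i < 0}) * bm + real (card {i\<in>I. k i > 0}) * bp"
    by (simp add: sum.distrib flip: sum.inter_filter[OF fin])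
  finally show ?thesis .
qed

section \<open>Equivariant immersions\<close>

locale equivariant_immersion =
  X: complex_action G "carrier G" act X + Y: complex_action G H actY Y
  for G :: "'g monoid" and act :: "'g \<Rightarrow> ('v,'e,'f,'v,'e,'f) cmorph" and X :: "('v,'e,'f) cplx"
    and H :: "'g set" and actY :: "'g \<Rightarrow> ('w,'d,'h,'w,'d,'h) cmorph" and Y :: "('w,'d,'h) cplx" +
  fixes phi :: "('w,'d,'h,'v,'e,'f) cmorph"
  assumes immersion: "immersion Y X phi"
    and equivariant: "equivariant H Y X actY act phi"
begin

lemma cmorphism_phi: "cmorphism Y X phi"
  using immersion unfolding immersion_def by blast

lemma in_carrier: "h \<in> H \<Longrightarrow> h \<in> carrier G"
  using subgroup.subset[OF Y.is_subgroup] by blast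

lemma equivariant_V: "h \<in> H \<Longrightarrow> y \<in> cV Y \<Longrightarrow> mV phi (actV actY h y) = actV act h (mV phi y)"
  and equivariant_E: "h \<in> H \<Longrightarrow> e \<in> cE Y \<Longrightarrow> mE phi (actE actY h e) = actE act h (mE phi e)"
  and equivariant_F: "h \<in> H \<Longrightarrow> f \<in> cF Y \<Longrightarrow> mF phi (actF actY h f) = actF act h (mF phi f)"
  and equivariant_C: "h \<in> H \<Longrightarrow> c \<in> corners Y \<Longrightarrow>
    cmapC Y phi (actC Y actY h c) = actC X act h (cmapC Y phi c)"
  using equivariant unfolding equivariant_def actV_def actE_def actF_def actC_def by blast+

lemma equivariant_End: "h \<in> H \<Longrightarrow> en \<in> cEnds Y \<Longrightarrow>
    cmapEnd phi (actEnd actY h en) = actEnd act h (cmapEnd phi en)"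
  using equivariant_E unfolding actEnd_def cmapEnd_def cEnds_def actE_def by auto

lemma stab_subset:
  "y \<in> cV Y \<Longrightarrow> stab H (actV actY) y \<subseteq> stab (carrier G) (actV act) (mV phi y)"
  "e \<in> cE Y \<Longrightarrow> stab H (actE actY) e \<subseteq> stab (carrier G) (actE act) (mE phi e)"
  "f \<in> cF Y \<Longrightarrow> stab H (actF actY) f \<subseteq> stab (carrier G) (actF act) (mF phi f)"
  unfolding stab_def using in_carrier by (auto simp flip: equivariant_V equivariant_E equivariant_F)

lemma proper_pullback: "proper_act (carrier G) X act \<Longrightarrow> proper_act H Y actY"
  using stab_subset cmorphism_phi finite_subset unfolding proper_act_def cmorphism_def by meson

lemma angle_pullback_invariant:
  "act_invariant (carrier G) (actC X act) (corners X) ang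
    \<Longrightarrow> act_invariant H (actC Y actY) (corners Y) (\<lambda>c. ang (cmapC Y phi c))"
  unfolding act_invariant_def
  using equivariant_C in_carrier cmapC_mem_corners[OF Y.wf cmorphism_phi] by simp

theorem euler_char_le_sum_kappa_vertex:
  assumes proper: "proper_act (carrier G) X act" and cocompact: "cocompact_act H Y actY"
    and ang: "act_invariant (carrier G) (actC X act) (corners X) ang"
    and nonpos: "\<And>f. f \<in> cF X \<Longrightarrow> kappa_face X ang f \<le> 0"
  shows "2 * pi * euler_char H Y actY
      \<le> (\<Sum>v\<in>orbs H (actV actY) (cV Y). kappa_vertex H Y actY (\<lambda>c. ang (cmapC Y phi c)) v)"
proof -
  have "kappa_face Y (\<lambda>c. ang (cmapC Y phi c)) (rep Ob) \<le> 0" if "Ob \<in> orbs H (actF actY) (cF Y)" for Ob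
    using subgroup_action.rep_in_set[OF Y.action_F that] kappa_face_cmapC[OF Y.wf cmorphism_phi]
      nonpos cmorphism_phi unfolding cmorphism_def by metis
  hence "(\<Sum>Ob\<in>orbs H (actF actY) (cF Y).
            kappa_face Y (\<lambda>c. ang (cmapC Y phi c)) (rep Ob) * invc (stab H (actF actY) (rep Ob))) \<le> 0"
    by (intro sum_nonpos mult_nonpos_nonneg invc_nonneg)
  thus ?thesis
    using Y.gauss_bonnet[OF proper_pullback[OF proper] cocompact angle_pullback_invariant[OF ang]]
    by simp
qed

lemma link_verts_image_subset: "cmapEnd phi ` link_verts Y y \<subseteq> link_verts X (mV phi y)"
  using cmapEnd_mem[OF Y.wf cmorphism_phi] endpt_cmapEnd[OF Y.wf cmorphism_phi]
  unfolding link_verts_def by auto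

lemma link_edges_image_subset: "cmapC Y phi ` link_edges Y y \<subseteq> link_edges X (mV phi y)"
  using cmapC_mem_corners[OF Y.wf cmorphism_phi] corner_vertex_cmapC[OF Y.wf cmorphism_phi]
  unfolding link_edges_def by auto

lemma link_image_section:
  assumes y: "y \<in> cV Y"
    and fin: "finite (link_verts X (mV phi y))" "finite (link_edges X (mV phi y))"
  shows "is_section X act (stab H (actV actY) y) (mV phi y)
           (cmapEnd phi ` link_verts Y y) (cmapC Y phi ` link_edges Y y)"
proof -
  let ?K = "stab H (actV actY) y"
  interpret verts: subgroup_action G ?K "actEnd actY" "link_verts Y y"
    unfolding link_verts_eq by (rule equivariant_map.fiber_action[OF Y.endpt_equivariant y])
  interpret edges: subgroup_action G ?K "actC Y actY" "link_edges Y y"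
    unfolding link_edges_eq by (rule equivariant_map.fiber_action[OF Y.corner_vertex_equivariant y])
  have K_H: "?K \<subseteq> H" unfolding stab_def by blast
  note verts_sub = link_verts_image_subset and edges_sub = link_edges_image_subset
  have ends_mem: "fst (link_ends X c) \<in> cmapEnd phi ` link_verts Y y \<and> snd (link_ends X c) \<in> cmapEnd phi ` link_verts Y y"
    if c: "c \<in> cmapC Y phi ` link_edges Y y" for c
  proof -
    obtain c' where c': "c' \<in> link_edges Y y" "c = cmapC Y phi c'" using c by blast
    have "c' \<in> corners Y" using c'(1) unfolding link_edges_def by blast
    thus ?thesis
      using link_ends_cmapC[OF Y.wf cmorphism_phi] link_ends_mem[OF Y.wf c'(1)] c'(2) by auto
  qed
  have verts_closed: "actEnd act g v \<in> cmapEnd phi ` link_verts Y y"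
    if g: "g \<in> ?K" and v: "v \<in> cmapEnd phi ` link_verts Y y" for g v
  proof -
    obtain s where s: "s \<in> link_verts Y y" "v = cmapEnd phi s" using v by blast
    have "actEnd act g v = cmapEnd phi (actEnd actY g s)"
      using equivariant_End[of g s] g K_H s unfolding link_verts_eq by auto
    thus ?thesis using verts.act_closed[OF g s(1)] by blast
  qed
  have edges_closed: "actC X act g c \<in> cmapC Y phi ` link_edges Y y"
    if g: "g \<in> ?K" and c: "c \<in> cmapC Y phi ` link_edges Y y" for g c
  proof -
    obtain c' where c': "c' \<in> link_edges Y y" "c = cmapC Y phi c'" using c by blast
    have "actC X act g c = cmapC Y phi (actC Y actY g c')"
      using equivariant_C[of g c'] g K_H c' unfolding link_edges_eq by auto
    thus ?thesis using edges.act_closed[OF g c'(1)] by blast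
  qed
  have "finite (cmapEnd phi ` link_verts Y y)" "finite (cmapC Y phi ` link_edges Y y)"
    using finite_subset[OF verts_sub fin(1)] finite_subset[OF edges_sub fin(2)] .
  thus ?thesis
    unfolding is_section_def orbs_def
    using verts_sub edges_sub ends_mem verts_closed edges_closed by simp
qed

lemma kappa_graph_link_image:
  assumes y: "y \<in> cV Y"
    and fin: "finite (link_verts X (mV phi y))" "finite (link_edges X (mV phi y))"
    and ang: "act_invariant (carrier G) (actC X act) (corners X) ang"
  shows "kappa_graph (stab H (actV actY) y) (actEnd actY) (link_verts Y y) (actC Y actY) (link_edges Y y)
           (\<lambda>c. ang (cmapC Y phi c))
       = kappa_graph (stab H (actV actY) y) (actEnd act) (cmapEnd phi ` link_verts Y y)
           (actC X act) (cmapC Y phi ` link_edges Y y) ang"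
proof -
  let ?K = "stab H (actV actY) y"
  let ?Vs = "cmapEnd phi ` link_verts Y y" and ?Es = "cmapC Y phi ` link_edges Y y"
  have sec: "is_section X act ?K (mV phi y) ?Vs ?Es" by (rule link_image_section[OF y fin])
  have K: "subgroup ?K G" "?K \<subseteq> H"
    using subgroup_action.stab_subgroup[OF Y.action_V y] unfolding stab_def by auto
  have verts_Y: "subgroup_action G ?K (actEnd actY) (link_verts Y y)"
    unfolding link_verts_eq by (rule equivariant_map.fiber_action[OF Y.endpt_equivariant y])
  have edges_Y: "subgroup_action G ?K (actC Y actY) (link_edges Y y)"
    unfolding link_edges_eq by (rule equivariant_map.fiber_action[OF Y.corner_vertex_equivariant y])
  have verts_X: "subgroup_action G ?K (actEnd act) ?Vs"
    using sec K in_carrier unfolding is_section_def link_verts_eq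
    by (intro subgroup_action.subgroup_action_restrict[OF X.action_ends]) auto
  have edges_X: "subgroup_action G ?K (actC X act) ?Es"
    using sec K in_carrier unfolding is_section_def link_edges_eq
    by (intro subgroup_action.subgroup_action_restrict[OF X.action_corners]) auto
  have verts_map: "equivariant_map G ?K (actEnd actY) (link_verts Y y) (actEnd act) ?Vs (cmapEnd phi)"
    using verts_Y verts_X equivariant_End K(2) unfolding equivariant_map_def equivariant_map_axioms_def
      link_verts_eq by blast
  have edges_map: "equivariant_map G ?K (actC Y actY) (link_edges Y y) (actC X act) ?Es (cmapC Y phi)"
    using edges_Y edges_X equivariant_C K(2) unfolding equivariant_map_def equivariant_map_axioms_def
      link_edges_eq by blast
  have inj: "inj_on (cmapEnd phi) (link_verts Y y)" "inj_on (cmapC Y phi) (link_edges Y y)"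
    using immersion y unfolding immersion_def by blast+
  have Es_corners: "?Es \<subseteq> corners X" using sec unfolding is_section_def link_edges_def by blast
  have ang_Es: "act_invariant ?K (actC X act) ?Es (\<lambda>c. pi - ang c)"
    unfolding act_invariant_def
  proof (intro ballI)
    fix g c assume "g \<in> ?K" "c \<in> ?Es"
    hence "g \<in> carrier G" "c \<in> corners X" using K(2) in_carrier Es_corners by auto
    thus "pi - ang (actC X act g c) = pi - ang c" using ang unfolding act_invariant_def by simp
  qed
  show ?thesis
    unfolding kappa_graph_orbit_sum
    using equivariant_map.orbit_sum_transfer[OF verts_map inj(1) refl act_invariant_const]
      equivariant_map.orbit_sum_transfer[OF edges_map inj(2) refl ang_Es]
    by simp
qed

lemma kappa_vertex_mem_Bvals:
  assumes proper: "proper_act (carrier G) X act" and cocompact: "cocompact_act (carrier G) X act"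
    and ang: "act_invariant (carrier G) (actC X act) (corners X) ang"
    and v: "v \<in> orbs H (actV actY) (cV Y)"
  shows "kappa_vertex H Y actY (\<lambda>c. ang (cmapC Y phi c)) v \<in> Bvals G X act ang"
proof -
  have y: "rep v \<in> cV Y" by (rule subgroup_action.rep_in_set[OF Y.action_V v])
  have x: "mV phi (rep v) \<in> cV X" using cmorphism_phi y unfolding cmorphism_def by blast
  have fin: "finite (link_verts X (mV phi (rep v)))" "finite (link_edges X (mV phi (rep v)))"
    using X.link_card_bounded[OF proper cocompact] x by blast+
  have "kappa_vertex H Y actY (\<lambda>c. ang (cmapC Y phi c)) v
      = kappa_graph (stab H (actV actY) (rep v)) (actEnd act) (cmapEnd phi ` link_verts Y (rep v))
          (actC X act) (cmapC Y phi ` link_edges Y (rep v)) ang"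
    unfolding kappa_vertex_def Let_def by (rule kappa_graph_link_image[OF y fin ang])
  moreover have "subgroup (stab H (actV actY) (rep v)) G"
    by (rule subgroup_action.stab_subgroup[OF Y.action_V y])
  ultimately show ?thesis
    unfolding Bvals_def using x stab_subset(1)[OF y] link_image_section[OF y fin] by blast
qed

end

theorem lemma7p12:
  fixes G :: "'g monoid"
    and X :: "('v,'e,'f) cplx" and act :: "'g \<Rightarrow> ('v,'e,'f,'v,'e,'f) cmorph"
    and ang :: "'f \<times> nat \<Rightarrow> real"
    and H :: "'g set"
    and Y :: "('w,'d,'h) cplx" and actY :: "'g \<Rightarrow> ('w,'d,'h,'w,'d,'h) cmorph"
    and phi :: "('w,'d,'h,'v,'e,'f) cmorph"
  assumes "group_cact G act X"
    and "\<forall>g\<in>carrier G. \<forall>c\<in>corners X. ang (cmapC X (act g) c) = ang c"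
    and "proper_act (carrier G) X act"
    and "cocompact_act (carrier G) X act"
    and "\<forall>f\<in>cF X. kappa_face X ang f \<le> 0"
    and "subgroup H G"
    and "group_cact (G\<lparr>carrier := H\<rparr>) actY Y"
    and "cocompact_act H Y actY"
    and "immersion Y X phi"
    and "equivariant H Y X actY act phi"
  shows "real (card (nega H Y actY (\<lambda>c. ang (cmapC Y phi c))))
           \<le> (2 * pi * euler_char H Y actY
               - Bplus G X act ang * real (card (posi H Y actY (\<lambda>c. ang (cmapC Y phi c)))))
             / Bminus G X act ang"
proof -
  have X: "complex_action G (carrier G) act X" using assms(1) by (rule group_cact_complex_action)
  interpret equivariant_immersion G act X H actY Y phi
    using X group_cact_subgroup_complex_action[OF complex_action.is_group[OF X] assms(6,7)] assms(9,10)
    by (simp add: equivariant_immersion_def equivariant_immersion_axioms_def)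
  have ang: "act_invariant (carrier G) (actC X act) (corners X) ang"
    using assms(2) unfolding act_invariant_def actC_def by blast
  define \<kappa> where "\<kappa> = kappa_vertex H Y actY (\<lambda>c. ang (cmapC Y phi c))"
  have fin: "finite (Bvals G X act ang)" by (rule finite_Bvals[OF X assms(3,4) ang])
  have mem: "\<And>v. v \<in> orbs H (actV actY) (cV Y) \<Longrightarrow> \<kappa> v \<in> Bvals G X act ang"
    unfolding \<kappa>_def by (rule kappa_vertex_mem_Bvals[OF assms(3,4) ang])
  have "2 * pi * euler_char H Y actY \<le> (\<Sum>v\<in>orbs H (actV actY) (cV Y). \<kappa> v)"
    unfolding \<kappa>_def using euler_char_le_sum_kappa_vertex[OF assms(3,8) ang] assms(5) by blast
  also have "\<dots> \<le> real (card (nega H Y actY (\<lambda>c. ang (cmapC Y phi c)))) * Bminus G X act ang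
      + real (card (posi H Y actY (\<lambda>c. ang (cmapC Y phi c)))) * Bplus G X act ang"
    unfolding nega_def posi_def \<kappa>_def[symmetric]
    using assms(8) mem le_Bminus[OF fin] le_Bplus[OF fin]
    by (intro sum_le_sign_bounds) (auto simp: cocompact_act_def)
  finally show ?thesis using Bminus_neg[OF fin] by (simp add: le_divide_eq algebra_simps)
qed

end
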